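(* Let $K>0$ and let $G$ be a probability distribution on $\mathbb{R}$ such that there is a measure $\nu_1$ dominating $G$ with $\frac{dG}{d\nu_1}(x)\le C$ for all $x$, for some $C>0$. Let $X_1,X_2,\ldots$ be i.i.d. real random variables with cumulative distribution function $H_X$ and $Y_1,Y_2,\ldots$ i.i.d. with cumulative distribution function $H_Y$, the two sequences independent, and $\mathbb{D}_{n,m}=\{X_1,\ldots,X_n,Y_1,\ldots,Y_m\}$. Let $\mathrm{WIKS}(\mathbb{D}_{n,m})=\mathbb{E}_{\mathbb{D}_{n,m}}[d(P_1,P_2)]$, where $d$ is the Kolmogorov distance and $\mathbb{E}_{\mathbb{D}_{n,m}}$ is expectation under the posterior of $(P_1,P_2)$ given $\mathbb{D}_{n,m}$ when $P_1,P_2$ are a priori independent $DP(K,G)$. Then $$\mathrm{WIKS}(\mathbb{D}_{n,m})\xrightarrow[n,m\to\infty]{a.s.}\sup_{x\in\mathbb{R}}|H_X(x)-H_Y(x)|.$$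
   Context: $DP(K,G)$ denotes the Dirichlet process with concentration parameter $K$ and base distribution $G$. Under the model where, given $(P_1,P_2)$, the $X_i$ are i.i.d. $P_1$ and the $Y_j$ i.i.d. $P_2$, and $P_1,P_2$ are a priori independent $DP(K,G)$, the posterior makes $P_1,P_2$ independent with $P_1\sim DP\big(K+n,\frac{KG+\sum_{i}\delta_{X_i}}{K+n}\big)$ and $P_2\sim DP\big(K+m,\frac{KG+\sum_j\delta_{Y_j}}{K+m}\big)$. The Kolmogorov distance is $d(P,Q)=\sup_{t}|P((-\infty,t])-Q((-\infty,t])|$. The WIKS index with cumulative weight $W$ is $\mathbb{E}_{\mathbb{D}_{n,m}}[W(d(P_1,P_2))]$; here the uniform weight $W(\varepsilon)=\varepsilon$ on $[0,1]$ is used. *)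

theory Defs
  imports "HOL-Probability.Probability"
begin

definition beta1 :: "real \<Rightarrow> real measure" where
  "beta1 K = density lborel (\<lambda>v. ennreal (indicator {0<..<1} v * K * (1 - v) powr (K - 1)))"

definition sb_weight :: "(nat \<Rightarrow> real) \<Rightarrow> nat \<Rightarrow> real" where
  "sb_weight v i = v i * (\<Prod>j<i. 1 - v j)"

text \<open>The discrete random probability measure sum_i w_i delta_{theta_i}
  (with a dummy value off the full-probability set where it is not a probability measure).\<close>
definition sb_measure :: "(nat \<Rightarrow> real) \<Rightarrow> (nat \<Rightarrow> real) \<Rightarrow> real measure" where
  "sb_measure v \<theta> =
     (if (\<forall>i. 0 \<le> v i \<and> v i \<le> 1) \<and> sb_weight v sums 1
      then measure_of UNIV (sets borel) (\<lambda>A. \<Sum>i. ennreal (sb_weight v i * indicator A (\<theta> i)))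
      else return borel 0)"

text \<open>Dirichlet process DP(K,G), via Sethuraman's stick-breaking construction:
  the law of sum_i w_i delta_{theta_i}, V_i iid Beta(1,K), theta_i iid G, independent.\<close>
definition DP :: "real \<Rightarrow> real measure \<Rightarrow> real measure measure" where
  "DP K G = distr (PiM (UNIV :: nat set) (\<lambda>_. beta1 K) \<Otimes>\<^sub>M PiM (UNIV :: nat set) (\<lambda>_. G))
                  (prob_algebra borel) (\<lambda>(v, \<theta>). sb_measure v \<theta>)"

definition kolmogorov_dist :: "real measure \<Rightarrow> real measure \<Rightarrow> real" where
  "kolmogorov_dist P Q = (SUP t. \<bar>measure P {..t} - measure Q {..t}\<bar>)"

definition post_base :: "real \<Rightarrow> real measure \<Rightarrow> (nat \<Rightarrow> real) \<Rightarrow> nat \<Rightarrow> real measure" where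
  "post_base K G xs n = measure_of UNIV (sets borel)
     (\<lambda>A. ennreal ((K * measure G A + (\<Sum>i<n. indicator A (xs i))) / (K + real n)))"

text \<open>WIKS index with uniform weight W(eps) = eps: posterior expectation of d(P1,P2),
  where the posterior makes P1, P2 independent DP's.\<close>
definition WIKS :: "real \<Rightarrow> real measure \<Rightarrow> (nat \<Rightarrow> real) \<Rightarrow> (nat \<Rightarrow> real) \<Rightarrow> nat \<Rightarrow> nat \<Rightarrow> real" where
  "WIKS K G xs ys n m =
     (\<integral>PQ. kolmogorov_dist (fst PQ) (snd PQ)
        \<partial>(DP (K + real n) (post_base K G xs n) \<Otimes>\<^sub>M DP (K + real m) (post_base K G ys m)))"

end

theory Submission
  imports Defs "HOL-Library.Discrete_Functions"
begin

text \<open>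
  For \<open>P\<close> distributed as \<open>DP(a, F\<^sub>0)\<close> and a Borel set \<open>S\<close>, \<open>E |P(S) - F\<^sub>0(S)| \<le> 1 / sqrt (a + 1)\<close>:
  in Sethuraman's representation \<open>P(S) - F\<^sub>0(S)\<close> is a series of stick-breaking weights times
  independent centred indicators, whose second moment is at most the sum of the expected squared
  weights, \<open>1 / (a + 1)\<close>. Finitely many half-lines, cut at quantiles of a distribution \<open>H\<close>,
  control the Kolmogorov distance to \<open>H\<close> up to any \<open>\<epsilon>\<close>. For the posterior, \<open>a = K + n\<close> grows,
  and by the strong law of large numbers the base measure converges to the sampling distribution
  on the countably many half-lines involved. Hence each posterior Dirichlet process concentrates in
  Kolmogorov distance around its sampling distribution, and by the triangle inequality
  \<open>E d(P\<^sub>1, P\<^sub>2)\<close> tends to \<open>d(H\<^sub>X, H\<^sub>Y)\<close>.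
\<close>

section \<open>Kolmogorov distance\<close>

lemma abs_measure_diff_le_1:
  assumes "prob_space P" "prob_space Q"
  shows "\<bar>measure P A - measure Q B\<bar> \<le> 1"
  using prob_space.prob_le_1[OF assms(1), of A] prob_space.prob_le_1[OF assms(2), of B]
    measure_nonneg[of P A] measure_nonneg[of Q B]
  by linarith

lemma kolmogorov_dist_bdd_above:
  assumes "prob_space P" "prob_space Q"
  shows "bdd_above (range (\<lambda>t. \<bar>measure P {..t} - measure Q {..t}\<bar>))"
  using abs_measure_diff_le_1[OF assms] by (intro bdd_aboveI[where M=1]) auto

lemma kolmogorov_dist_ge:
  assumes "prob_space P" "prob_space Q"
  shows "\<bar>measure P {..t} - measure Q {..t}\<bar> \<le> kolmogorov_dist P Q"
  unfolding kolmogorov_dist_def by (rule cSUP_upper[OF _ kolmogorov_dist_bdd_above[OF assms]]) auto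

lemma kolmogorov_dist_le:
  assumes "\<And>t. \<bar>measure P {..t} - measure Q {..t}\<bar> \<le> c"
  shows "kolmogorov_dist P Q \<le> c"
  unfolding kolmogorov_dist_def by (rule cSUP_least) (use assms in auto)

lemma kolmogorov_dist_nonneg:
  assumes "prob_space P" "prob_space Q"
  shows "0 \<le> kolmogorov_dist P Q"
  using kolmogorov_dist_ge[OF assms, of 0] by linarith

lemma kolmogorov_dist_le_1:
  assumes "prob_space P" "prob_space Q"
  shows "kolmogorov_dist P Q \<le> 1"
  using abs_measure_diff_le_1[OF assms] by (intro kolmogorov_dist_le)

lemma kolmogorov_dist_commute: "kolmogorov_dist P Q = kolmogorov_dist Q P"
  unfolding kolmogorov_dist_def by (simp add: abs_minus_commute)

lemma kolmogorov_dist_triangle: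
  assumes "prob_space P" "prob_space Q" "prob_space R"
  shows "kolmogorov_dist P R \<le> kolmogorov_dist P Q + kolmogorov_dist Q R"
proof (rule kolmogorov_dist_le)
  fix t
  show "\<bar>measure P {..t} - measure R {..t}\<bar> \<le> kolmogorov_dist P Q + kolmogorov_dist Q R"
    using kolmogorov_dist_ge[OF assms(1,2), of t] kolmogorov_dist_ge[OF assms(2,3), of t]
    by linarith
qed

lemma abs_kolmogorov_dist_diff_le:
  assumes "prob_space P" "prob_space Q" "prob_space P'" "prob_space Q'"
  shows "\<bar>kolmogorov_dist P Q - kolmogorov_dist P' Q'\<bar> \<le> kolmogorov_dist P P' + kolmogorov_dist Q Q'"
  using kolmogorov_dist_triangle[OF assms(1,3,2)] kolmogorov_dist_triangle[OF assms(3,4,2)]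
    kolmogorov_dist_triangle[OF assms(3,1,4)] kolmogorov_dist_triangle[OF assms(1,2,4)]
    kolmogorov_dist_commute[of P' P] kolmogorov_dist_commute[of Q Q']
  unfolding abs_le_iff by linarith

text \<open>Right continuity of distribution functions lets the supremum run over the rationals,
  which makes the Kolmogorov distance a measurable function of the pair of measures.\<close>

lemma kolmogorov_dist_SUP_Rats:
  assumes P: "real_distribution P" and Q: "real_distribution Q"
  shows "kolmogorov_dist P Q = (SUP q\<in>\<rat>. \<bar>measure P {..q} - measure Q {..q}\<bar>)"
proof -
  interpret P: real_distribution P by fact
  interpret Q: real_distribution Q by fact
  let ?g = "\<lambda>s. \<bar>measure P {..s} - measure Q {..s}\<bar>"
  define S where "S = (SUP q\<in>\<rat>. ?g q)"
  have bdd: "bdd_above (?g ` \<rat>)"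
    using kolmogorov_dist_bdd_above[OF P.prob_space_axioms Q.prob_space_axioms]
    by (rule bdd_above_mono) auto
  have "?g t \<le> S" for t
  proof (rule ccontr)
    assume "\<not> ?g t \<le> S"
    moreover have "(?g \<longlongrightarrow> ?g t) (at_right t)"
      using P.cdf_is_right_cont[of t] Q.cdf_is_right_cont[of t]
      unfolding cdf_def continuous_within by (intro tendsto_intros)
    ultimately have "eventually (\<lambda>s. S < ?g s) (at_right t)"
      by (intro order_tendstoD) auto
    then obtain b where b: "b > t" "\<And>s. t < s \<Longrightarrow> s < b \<Longrightarrow> S < ?g s"
      unfolding eventually_at_right_field by blast
    obtain r where r: "r \<in> \<rat>" "t < r" "r < b"
      using Rats_dense_in_real[OF b(1)] by blast
    have "?g r \<le> S" unfolding S_def by (rule cSUP_upper[OF r(1) bdd])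
    with b(2)[OF r(2,3)] show False by simp
  qed
  then have "kolmogorov_dist P Q \<le> S" by (rule kolmogorov_dist_le)
  moreover have "S \<le> kolmogorov_dist P Q"
    unfolding S_def using Rats_0
    by (intro cSUP_least kolmogorov_dist_ge P.prob_space_axioms Q.prob_space_axioms) auto
  ultimately show ?thesis unfolding S_def by simp
qed

lemma kolmogorov_dist_measurable:
  "(\<lambda>PQ. kolmogorov_dist (fst PQ) (snd PQ))
     \<in> borel_measurable (prob_algebra borel \<Otimes>\<^sub>M prob_algebra borel)"
proof -
  have "(\<lambda>PQ. SUP q\<in>\<rat>. \<bar>measure (fst PQ) {..q::real} - measure (snd PQ) {..q}\<bar>)
        \<in> borel_measurable (prob_algebra borel \<Otimes>\<^sub>M prob_algebra borel)"
  proof (rule borel_measurable_cSUP[OF countable_rat])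
    fix q :: real
    show "(\<lambda>PQ. \<bar>measure (fst PQ) {..q} - measure (snd PQ) {..q}\<bar>)
        \<in> borel_measurable (prob_algebra borel \<Otimes>\<^sub>M prob_algebra borel)"
      using measurable_measure_prob_algebra[of "{..q}" "borel :: real measure"] by measurable
  next
    fix PQ :: "real measure \<times> real measure"
    assume "PQ \<in> space (prob_algebra borel \<Otimes>\<^sub>M prob_algebra borel)"
    then show "bdd_above ((\<lambda>q. \<bar>measure (fst PQ) {..q} - measure (snd PQ) {..q}\<bar>) ` \<rat>)"
      using kolmogorov_dist_bdd_above[of "fst PQ" "snd PQ"]
      by (auto simp: space_pair_measure space_prob_algebra intro: bdd_above_mono)
  qed
  then show ?thesis
  proof (rule measurable_cong[THEN iffD1, rotated])
    fix PQ :: "real measure \<times> real measure"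
    assume "PQ \<in> space (prob_algebra borel \<Otimes>\<^sub>M prob_algebra borel)"
    then have "real_distribution (fst PQ)" "real_distribution (snd PQ)"
      by (auto simp: space_pair_measure space_prob_algebra real_distribution_def
          real_distribution_axioms_def)
    then show "(SUP q\<in>\<rat>. \<bar>measure (fst PQ) {..q} - measure (snd PQ) {..q}\<bar>)
        = kolmogorov_dist (fst PQ) (snd PQ)"
      by (simp add: kolmogorov_dist_SUP_Rats)
  qed
qed

lemma kolmogorov_dist_measurable_left:
  assumes "real_distribution R"
  shows "(\<lambda>P. kolmogorov_dist P R) \<in> borel_measurable (prob_algebra borel)"
proof -
  have "R \<in> space (prob_algebra borel)"
    using assms by (auto simp: space_prob_algebra real_distribution_def real_distribution_axioms_def)
  then have "(\<lambda>P. (P, R)) \<in> prob_algebra borel \<rightarrow>\<^sub>M prob_algebra borel \<Otimes>\<^sub>M prob_algebra borel"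
    by measurable
  from measurable_comp[OF this kolmogorov_dist_measurable] show ?thesis
    by (simp add: comp_def)
qed

section \<open>The posterior base measure\<close>

lemma emeasure_measure_of_borel:
  fixes \<mu> :: "real set \<Rightarrow> ennreal"
  assumes "\<mu> {} = 0" "countably_additive (sets borel) \<mu>" "A \<in> sets borel"
  shows "emeasure (measure_of UNIV (sets borel) \<mu>) A = \<mu> A"
proof -
  have "sigma_algebra UNIV (sets borel)"
    using sets.sigma_algebra_axioms[of borel] by simp
  then show ?thesis
    using assms by (intro emeasure_measure_of_sigma) (auto simp: positive_def)
qed

lemma countably_additive_plus_point_masses:
  fixes c w :: ennreal and xs :: "nat \<Rightarrow> real"
  assumes "sets G = sets borel"
  shows "countably_additive (sets borel) (\<lambda>A. c * emeasure G A + (\<Sum>i<n. w * indicator A (xs i)))"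
  unfolding countably_additive_def
proof (intro allI impI)
  fix F :: "nat \<Rightarrow> real set"
  assume F: "range F \<subseteq> sets borel" "disjoint_family F" "\<Union> (range F) \<in> sets borel"
  have "(\<Sum>i. c * emeasure G (F i) + (\<Sum>j<n. w * indicator (F i) (xs j)))
      = (\<Sum>i. c * emeasure G (F i)) + (\<Sum>i. \<Sum>j<n. w * indicator (F i) (xs j))"
    by (rule suminf_add[symmetric]) auto
  also have "(\<Sum>i. c * emeasure G (F i)) = c * emeasure G (\<Union>i. F i)"
    using F assms by (simp add: suminf_emeasure)
  also have "(\<Sum>i. \<Sum>j<n. w * indicator (F i) (xs j)) = (\<Sum>j<n. w * indicator (\<Union>i. F i) (xs j))"
    using F by (subst suminf_sum) (auto simp: suminf_indicator)
  finally show "(\<Sum>i. c * emeasure G (F i) + (\<Sum>j<n. w * indicator (F i) (xs j)))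
      = c * emeasure G (\<Union> (range F)) + (\<Sum>j<n. w * indicator (\<Union> (range F)) (xs j))" .
qed

lemma emeasure_post_base:
  fixes K :: real
  assumes K: "K > 0" and G: "prob_space G" "sets G = sets borel" and A: "A \<in> sets borel"
  shows "emeasure (post_base K G xs n) A
    = ennreal ((K * measure G A + (\<Sum>i<n. indicator A (xs i))) / (K + real n))"
proof -
  have pos: "K + real n > 0" using K by simp
  have split: "ennreal ((K * measure G A + (\<Sum>i<n. indicator A (xs i))) / (K + real n))
      = ennreal (K / (K + n)) * emeasure G A + (\<Sum>i<n. ennreal (1 / (K + n)) * indicator A (xs i))" for A
  proof -
    have "(K * measure G A + (\<Sum>i<n. indicator A (xs i))) / (K + real n)
        = K / (K + n) * measure G A + (\<Sum>i<n. 1 / (K + n) * indicator A (xs i))"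
      by (simp add: add_divide_distrib sum_divide_distrib)
    moreover have "ennreal (K / (K + n) * measure G A) = ennreal (K / (K + n)) * emeasure G A"
      using K pos G(1)
      by (simp add: ennreal_mult[symmetric] finite_measure.emeasure_eq_measure prob_space.finite_measure)
    moreover have "ennreal (1 / (K + n) * indicator A x) = ennreal (1 / (K + n)) * indicator A x" for x
      by (cases "x \<in> A") auto
    then have "ennreal (\<Sum>i<n. 1 / (K + n) * indicator A (xs i))
        = (\<Sum>i<n. ennreal (1 / (K + n)) * indicator A (xs i))"
      using pos by (subst sum_ennreal[symmetric]) auto
    moreover have "0 \<le> (\<Sum>i<n. 1 / (K + n) * indicator A (xs i))"
      using pos by (intro sum_nonneg) auto
    ultimately show ?thesis
      using K pos by (simp only: ennreal_plus) simp
  qed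
  show ?thesis
    unfolding post_base_def split
    by (intro emeasure_measure_of_borel countably_additive_plus_point_masses G(2) A) simp
qed

lemma sets_post_base [simp]: "sets (post_base K G xs n) = sets borel"
  unfolding post_base_def using sets.sigma_sets_eq[of borel] by simp

lemma space_post_base [simp]: "space (post_base K G xs n) = UNIV"
  unfolding post_base_def by simp

lemma measure_post_base:
  fixes K :: real
  assumes K: "K > 0" and G: "prob_space G" "sets G = sets borel" and A: "A \<in> sets borel"
  shows "measure (post_base K G xs n) A = (K * measure G A + (\<Sum>i<n. indicator A (xs i))) / (K + real n)"
  unfolding measure_def emeasure_post_base[OF assms]
  using K by (intro enn2real_ennreal divide_nonneg_pos add_nonneg_nonneg sum_nonneg) auto

lemma real_distribution_post_base:
  fixes K :: real
  assumes K: "K > 0" and G: "prob_space G" "sets G = sets borel"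
  shows "real_distribution (post_base K G xs n)"
proof -
  have "measure G UNIV = 1"
    using G prob_space.prob_space sets_eq_imp_space_eq[of G borel] by fastforce
  then have "emeasure (post_base K G xs n) (space (post_base K G xs n)) = 1"
    using K by (simp add: emeasure_post_base[OF K G])
  then show ?thesis
    by (simp add: real_distribution_def real_distribution_axioms_def prob_spaceI)
qed

section \<open>The Beta(1, a) distribution\<close>

lemma has_integral_beta1_moment:
  fixes a :: real and p :: nat
  assumes a: "a > 0"
  shows "((\<lambda>v. a * (1 - v) powr (a - 1 + p)) has_integral (a / (a + p))) {0<..<1}"
proof -
  define F where "F v = - (a / (a + p)) * (1 - v) powr (a + p)" for v :: real
  have ap: "a + real p > 0" using a by simp
  have "((\<lambda>v. a * (1 - v) powr (a - 1 + p)) has_integral (F 1 - F 0)) {0..1}"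
  proof (rule fundamental_theorem_of_calculus_interior)
    show "continuous_on {0..1} F"
      unfolding F_def using ap by (intro continuous_intros continuous_on_powr') auto
    fix x :: real assume x: "x \<in> {0<..<1}"
    have "(F has_real_derivative (- (a / (a + p)) * ((a + p) * (1 - x) powr (a + p - 1) * (- 1)))) (at x)"
      unfolding F_def using x by (auto intro!: derivative_eq_intros)
    moreover have "- (a / (a + p)) * ((a + p) * (1 - x) powr (a + p - 1) * (- 1)) = a * (1 - x) powr (a - 1 + p)"
      using ap by (simp add: field_simps)
    ultimately show "(F has_vector_derivative a * (1 - x) powr (a - 1 + p)) (at x)"
      by (simp add: has_real_derivative_iff_has_vector_derivative)
  qed simp
  moreover have "F 1 - F 0 = a / (a + p)"
    unfolding F_def using ap by simp
  ultimately show ?thesis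
    by (simp add: has_integral_Icc_iff_Ioo)
qed

lemma sets_beta1 [simp, measurable_cong]: "sets (beta1 a) = sets borel"
  unfolding beta1_def by simp

lemma AE_beta1: "AE v in beta1 a. 0 < v \<and> v < 1"
  unfolding beta1_def by (subst AE_density) (auto simp: indicator_def intro!: AE_I2)

lemma nn_integral_beta1_moment:
  fixes a :: real and p :: nat
  assumes a: "a > 0"
  shows "(\<integral>\<^sup>+ v. ennreal ((1 - v) ^ p) \<partial>beta1 a) = ennreal (a / (a + p))"
proof -
  have "(\<integral>\<^sup>+ v. ennreal ((1 - v) ^ p) \<partial>beta1 a)
      = (\<integral>\<^sup>+ v. ennreal (a * (1 - v) powr (a - 1 + p)) * indicator {0<..<1} v \<partial>lborel)"
    unfolding beta1_def
  proof (subst nn_integral_density, simp, simp, intro nn_integral_cong)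
    fix v :: real
    show "ennreal (indicator {0<..<1} v * a * (1 - v) powr (a - 1)) * ennreal ((1 - v) ^ p)
        = ennreal (a * (1 - v) powr (a - 1 + p)) * indicator {0<..<1} v"
      using a by (cases "v \<in> {0<..<1}")
        (simp_all add: powr_add powr_realpow ennreal_mult[symmetric] mult.assoc)
  qed
  also have "\<dots> = ennreal (a / (a + p))"
    by (rule nn_integral_has_integral_lebesgue'[OF _ has_integral_beta1_moment[OF a]]) (use a in auto)
  finally show ?thesis .
qed

lemma prob_space_beta1:
  assumes "a > 0"
  shows "prob_space (beta1 a)"
proof (rule prob_spaceI)
  show "emeasure (beta1 a) (space (beta1 a)) = 1"
    using nn_integral_beta1_moment[OF assms, of 0] assms by simp
qed

lemma integral_beta1_moment:
  fixes a :: real and p :: nat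
  assumes a: "a > 0"
  shows "(\<integral>v. (1 - v) ^ p \<partial>beta1 a) = a / (a + p)"
proof -
  have "(\<integral>v. (1 - v) ^ p \<partial>beta1 a) = enn2real (\<integral>\<^sup>+ v. ennreal ((1 - v) ^ p) \<partial>beta1 a)"
    by (rule integral_eq_nn_integral) (use AE_beta1[of a] in \<open>auto elim: eventually_mono\<close>)
  also have "\<dots> = a / (a + p)" using a by (simp add: nn_integral_beta1_moment)
  finally show ?thesis .
qed

lemma integrable_beta1_bounded:
  fixes f :: "real \<Rightarrow> real"
  assumes a: "a > 0" and f: "f \<in> borel_measurable borel"
    and bound: "\<And>v. 0 < v \<Longrightarrow> v < 1 \<Longrightarrow> \<bar>f v\<bar> \<le> B"
  shows "integrable (beta1 a) f"
proof -
  interpret prob_space "beta1 a" by (rule prob_space_beta1[OF a])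
  show ?thesis
    using AE_beta1[of a] f bound by (intro integrable_const_bound[where B=B]) (auto elim: eventually_mono)
qed

lemma integral_beta1_square:
  assumes a: "a > 0"
  shows "(\<integral>v. v\<^sup>2 \<partial>beta1 a) = 2 / ((a + 1) * (a + 2))"
proof -
  interpret prob_space "beta1 a" by (rule prob_space_beta1[OF a])
  have int: "integrable (beta1 a) (\<lambda>v. (1 - v)\<^sup>2)" "integrable (beta1 a) (\<lambda>v. 1 - v)"
    using a by (auto intro!: integrable_beta1_bounded[where B=1] simp: abs_le_iff power_le_one)
  have "(\<integral>v. v\<^sup>2 \<partial>beta1 a) = (\<integral>v. ((1 - v)\<^sup>2 + (- 2) * (1 - v)) + 1 \<partial>beta1 a)"
    by (rule Bochner_Integration.integral_cong) (auto simp: power2_eq_square algebra_simps)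
  also have "\<dots> = (\<integral>v. (1 - v)\<^sup>2 \<partial>beta1 a) + (- 2) * (\<integral>v. 1 - v \<partial>beta1 a) + (\<integral>v. 1 \<partial>beta1 a)"
    by (subst Bochner_Integration.integral_add[OF Bochner_Integration.integrable_add[OF int(1)
          integrable_mult_right[OF int(2)]] integrable_const],
        subst Bochner_Integration.integral_add[OF int(1) integrable_mult_right[OF int(2)]])
      (simp only: integral_mult_right_zero)
  also have "\<dots> = a / (a + 2) - 2 * (a / (a + 1)) + 1"
    using integral_beta1_moment[OF a, of 1] integral_beta1_moment[OF a, of 2] prob_space by simp
  also have "\<dots> = 2 / ((a + 1) * (a + 2))"
    using a by (simp add: divide_simps) (simp add: algebra_simps)
  finally show ?thesis .
qed

section \<open>Stick-breaking measures\<close>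

definition sb_proper :: "(nat \<Rightarrow> real) \<Rightarrow> bool" where
  "sb_proper v \<longleftrightarrow> (\<forall>i. 0 \<le> v i \<and> v i \<le> 1) \<and> sb_weight v sums 1"

definition sb_remainder :: "nat \<Rightarrow> (nat \<Rightarrow> real) \<Rightarrow> real" where
  "sb_remainder N v = (\<Prod>j<N. 1 - v j)"

lemma sb_weight_nonneg: "\<forall>i. 0 \<le> v i \<and> v i \<le> 1 \<Longrightarrow> 0 \<le> sb_weight v i"
  unfolding sb_weight_def by (auto intro!: mult_nonneg_nonneg prod_nonneg)

lemma sb_weight_le_1: "\<forall>i. 0 \<le> v i \<and> v i \<le> 1 \<Longrightarrow> sb_weight v i \<le> 1"
  unfolding sb_weight_def by (auto intro!: mult_le_one prod_le_1 prod_nonneg)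

lemma sb_remainder_nonneg: "\<forall>i. 0 \<le> v i \<and> v i \<le> 1 \<Longrightarrow> 0 \<le> sb_remainder N v"
  unfolding sb_remainder_def by (auto intro!: prod_nonneg)

lemma sb_remainder_le_1: "\<forall>i. 0 \<le> v i \<and> v i \<le> 1 \<Longrightarrow> sb_remainder N v \<le> 1"
  unfolding sb_remainder_def by (auto intro!: prod_le_1)

lemma sb_remainder_decseq:
  assumes "\<forall>i. 0 \<le> v i \<and> v i \<le> 1"
  shows "decseq (\<lambda>N. sb_remainder N v)"
proof (rule decseq_SucI)
  fix N
  have "sb_remainder N v * (1 - v N) \<le> sb_remainder N v * 1"
    using assms sb_remainder_nonneg[OF assms, of N] by (intro mult_left_mono) auto
  then show "sb_remainder (Suc N) v \<le> sb_remainder N v"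
    by (simp add: sb_remainder_def)
qed

lemma sum_sb_weight: "(\<Sum>i<N. sb_weight v i) = 1 - sb_remainder N v"
  unfolding sb_remainder_def by (induction N) (auto simp: sb_weight_def algebra_simps)

lemma sb_properI:
  assumes "\<forall>i. 0 \<le> v i \<and> v i \<le> 1" and "(\<lambda>N. sb_remainder N v) \<longlonglongrightarrow> 0"
  shows "sb_proper v"
proof -
  have "(\<lambda>N. 1 - sb_remainder N v) \<longlonglongrightarrow> 1 - 0"
    by (intro tendsto_intros assms(2))
  then show ?thesis
    using assms(1) by (simp add: sb_proper_def sums_def sum_sb_weight)
qed

lemma suminf_suminf_commute_ennreal:
  fixes g :: "nat \<Rightarrow> nat \<Rightarrow> ennreal"
  shows "(\<Sum>i. \<Sum>k. g i k) = (\<Sum>k. \<Sum>i. g i k)"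
proof -
  have "(\<Sum>i. \<Sum>k. g i k) = (\<Sum>i. \<integral>\<^sup>+k. g i k \<partial>count_space UNIV)"
    by (simp add: nn_integral_count_space_nat)
  also have "\<dots> = (\<integral>\<^sup>+k. (\<Sum>i. g i k) \<partial>count_space UNIV)"
    by (rule nn_integral_suminf[symmetric]) auto
  also have "\<dots> = (\<Sum>k. \<Sum>i. g i k)"
    by (simp add: nn_integral_count_space_nat)
  finally show ?thesis .
qed

lemma emeasure_sb_measure:
  assumes v: "sb_proper v" and A: "A \<in> sets borel"
  shows "emeasure (sb_measure v \<theta>) A = (\<Sum>i. ennreal (sb_weight v i * indicator A (\<theta> i)))"
proof -
  let ?\<mu> = "\<lambda>A. \<Sum>i. ennreal (sb_weight v i * indicator A (\<theta> i))"
  have w: "0 \<le> sb_weight v i" for i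
    using v sb_weight_nonneg by (auto simp: sb_proper_def)
  have split: "?\<mu> A = (\<Sum>i. ennreal (sb_weight v i) * indicator A (\<theta> i))" for A
    using w by (intro suminf_cong) (auto simp: indicator_def)
  have "countably_additive (sets borel) ?\<mu>"
    unfolding countably_additive_def
  proof (intro allI impI)
    fix F :: "nat \<Rightarrow> real set"
    assume F: "range F \<subseteq> sets borel" "disjoint_family F" "\<Union> (range F) \<in> sets borel"
    have "(\<Sum>i. ?\<mu> (F i)) = (\<Sum>k. \<Sum>i. ennreal (sb_weight v k) * indicator (F i) (\<theta> k))"
      unfolding split by (rule suminf_suminf_commute_ennreal)
    also have "\<dots> = (\<Sum>k. ennreal (sb_weight v k) * indicator (\<Union>i. F i) (\<theta> k))"
      using F by (simp add: suminf_indicator)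
    finally show "(\<Sum>i. ?\<mu> (F i)) = ?\<mu> (\<Union> (range F))"
      unfolding split by simp
  qed
  moreover have "sb_measure v \<theta> = measure_of UNIV (sets borel) ?\<mu>"
    using v unfolding sb_measure_def sb_proper_def by simp
  ultimately show ?thesis
    using A by (simp add: emeasure_measure_of_borel)
qed

lemma sb_measure_improper: "\<not> sb_proper v \<Longrightarrow> sb_measure v \<theta> = return borel 0"
  unfolding sb_measure_def sb_proper_def by auto

lemma sets_sb_measure [simp, measurable_cong]: "sets (sb_measure v \<theta>) = sets borel"
  unfolding sb_measure_def using sets.sigma_sets_eq[of "borel :: real measure"] by simp

lemma space_sb_measure [simp]: "space (sb_measure v \<theta>) = UNIV"
  unfolding sb_measure_def by simp

lemma prob_space_sb_measure: "prob_space (sb_measure v \<theta>)"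
proof (cases "sb_proper v")
  case True
  then have v: "\<forall>i. 0 \<le> v i \<and> v i \<le> 1" and s: "sb_weight v sums 1"
    by (auto simp: sb_proper_def)
  have "emeasure (sb_measure v \<theta>) UNIV = ennreal (\<Sum>i. sb_weight v i)"
    using s sb_weight_nonneg[OF v] emeasure_sb_measure[OF True, of UNIV \<theta>]
    by (simp add: suminf_ennreal2 sums_iff)
  then show ?thesis
    using s by (intro prob_spaceI) (simp add: sums_iff)
qed (simp add: sb_measure_improper prob_space_return)

lemma measure_sb_measure:
  assumes v: "sb_proper v" and A: "A \<in> sets borel"
  shows "summable (\<lambda>i. sb_weight v i * indicator A (\<theta> i))"
    and "measure (sb_measure v \<theta>) A = (\<Sum>i. sb_weight v i * indicator A (\<theta> i))"
proof -
  have w: "\<forall>i. 0 \<le> v i \<and> v i \<le> 1" "sb_weight v sums 1"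
    using v by (auto simp: sb_proper_def)
  have nn: "0 \<le> sb_weight v i * indicator A (\<theta> i)" for i
    using sb_weight_nonneg[OF w(1)] by simp
  show sm: "summable (\<lambda>i. sb_weight v i * indicator A (\<theta> i))"
  proof (rule summable_comparison_test')
    show "summable (sb_weight v)" using w(2) by (simp add: sums_iff)
    show "norm (sb_weight v n * indicator A (\<theta> n)) \<le> sb_weight v n" for n
      using sb_weight_nonneg[OF w(1)] by (simp add: indicator_def)
  qed
  have "emeasure (sb_measure v \<theta>) A = ennreal (\<Sum>i. sb_weight v i * indicator A (\<theta> i))"
    unfolding emeasure_sb_measure[OF v A] using nn sm by (rule suminf_ennreal2)
  then show "measure (sb_measure v \<theta>) A = (\<Sum>i. sb_weight v i * indicator A (\<theta> i))"
    unfolding measure_def using nn sm by (simp add: suminf_nonneg)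
qed

lemma sb_proper_measurable [measurable]:
  "Measurable.pred (PiM UNIV (\<lambda>_. borel :: real measure)) sb_proper"
  unfolding sb_proper_def sums_def sb_weight_def by measurable

lemma sb_measure_measurable:
  assumes "sets N1 = sets (borel :: real measure)" "sets N2 = sets (borel :: real measure)"
  shows "(\<lambda>x. sb_measure (fst x) (snd x))
    \<in> (PiM UNIV (\<lambda>_. N1) \<Otimes>\<^sub>M PiM UNIV (\<lambda>_. N2)) \<rightarrow>\<^sub>M prob_algebra borel"
proof -
  let ?B = "PiM UNIV (\<lambda>_. borel :: real measure) \<Otimes>\<^sub>M PiM UNIV (\<lambda>_. borel :: real measure)"
  have "sets (PiM UNIV (\<lambda>_. N1) \<Otimes>\<^sub>M PiM UNIV (\<lambda>_. N2)) = sets ?B"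
    by (intro sets_pair_measure_cong sets_PiM_cong) (auto simp: assms)
  moreover have "(\<lambda>x. sb_measure (fst x) (snd x)) \<in> ?B \<rightarrow>\<^sub>M prob_algebra borel"
  proof (intro measurable_prob_algebraI measurable_subprob_algebra)
    fix A :: "real set" assume [measurable]: "A \<in> sets borel"
    have "(\<lambda>x. if sb_proper (fst x) then \<Sum>i. ennreal (sb_weight (fst x) i * indicator A (snd x i))
        else emeasure (return borel (0::real)) A) \<in> borel_measurable ?B"
      unfolding sb_weight_def by measurable
    then show "(\<lambda>x. emeasure (sb_measure (fst x) (snd x)) A) \<in> borel_measurable ?B"
      by (rule measurable_cong[THEN iffD1, rotated])
        (auto simp: emeasure_sb_measure sb_measure_improper)
  qed (auto simp: prob_space_sb_measure prob_space_imp_subprob_space)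
  ultimately show ?thesis
    using measurable_cong_sets by blast
qed

lemma abs_suminf_shift_le:
  fixes c w :: "nat \<Rightarrow> real"
  assumes "summable w" and "\<And>i. \<bar>c i\<bar> \<le> w i"
  shows "\<bar>\<Sum>n. c (n + N)\<bar> \<le> (\<Sum>n. w (n + N))"
proof -
  have w: "summable (\<lambda>n. w (n + N))"
    using assms(1) by (rule summable_ignore_initial_segment)
  have c: "summable (\<lambda>n. \<bar>c (n + N)\<bar>)"
    by (rule summable_rabs_comparison_test[OF _ w]) (use assms(2) in blast)
  have "(\<Sum>n. \<bar>c (n + N)\<bar>) \<le> (\<Sum>n. w (n + N))"
    by (rule suminf_le) (use assms(2) c w in auto)
  with summable_rabs[OF c] show ?thesis by linarith
qed

text \<open>When the weights sum to one, \<open>P(S) - p\<close> is the series \<open>\<Sum>\<^sub>i w\<^sub>i (1\<^sub>S(\<theta>\<^sub>i) - p)\<close>,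
  whose tail after \<open>N\<close> terms is bounded by the remaining stick.\<close>

lemma sb_measure_deviation_le:
  assumes v: "sb_proper v" and S: "S \<in> sets borel" and p: "0 \<le> p" "p \<le> 1"
  shows "\<bar>measure (sb_measure v \<theta>) S - p\<bar>
    \<le> \<bar>\<Sum>i<N. sb_weight v i * (indicator S (\<theta> i) - p)\<bar> + sb_remainder N v"
proof -
  define w where "w = sb_weight v"
  define c where "c i = w i * (indicator S (\<theta> i) - p)" for i
  have w0: "0 \<le> w i" for i
    using v sb_weight_nonneg unfolding sb_proper_def w_def by blast
  have sw: "w sums 1" using v by (simp add: sb_proper_def w_def)
  then have smw: "summable w" by (simp add: sums_iff)
  have sI: "summable (\<lambda>i. w i * indicator S (\<theta> i))"
    and meq: "measure (sb_measure v \<theta>) S = (\<Sum>i. w i * indicator S (\<theta> i))"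
    using measure_sb_measure[OF v S, of \<theta>] by (auto simp: w_def)
  have ceq: "c = (\<lambda>i. w i * indicator S (\<theta> i) - w i * p)"
    by (auto simp: c_def algebra_simps)
  have smc: "summable c"
    unfolding ceq by (intro summable_diff sI summable_mult2 smw)
  have "suminf c = (\<Sum>i. w i * indicator S (\<theta> i)) - (\<Sum>i. w i * p)"
    unfolding ceq by (rule suminf_diff[OF sI summable_mult2[OF smw], symmetric])
  also have "(\<Sum>i. w i * p) = p"
    using sw by (simp add: suminf_mult2[OF smw, symmetric] sums_iff)
  finally have "measure (sb_measure v \<theta>) S - p = (\<Sum>n. c (n + N)) + (\<Sum>i<N. c i)"
    unfolding meq suminf_split_initial_segment[OF smc, of N] by simp
  then have "\<bar>measure (sb_measure v \<theta>) S - p\<bar> \<le> \<bar>\<Sum>n. c (n + N)\<bar> + \<bar>\<Sum>i<N. c i\<bar>"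
    by (simp add: abs_triangle_ineq)
  moreover have "\<bar>\<Sum>n. c (n + N)\<bar> \<le> (\<Sum>n. w (n + N))"
  proof (rule abs_suminf_shift_le[OF smw])
    fix i
    have "\<bar>indicator S (\<theta> i) - p\<bar> \<le> 1" using p by (auto simp: indicator_def)
    then show "\<bar>c i\<bar> \<le> w i" using w0[of i] by (simp add: c_def abs_mult mult_left_le)
  qed
  moreover have "(\<Sum>n. w (n + N)) = sb_remainder N v"
    using suminf_split_initial_segment[OF smw, of N] sw sum_sb_weight[where N=N and v=v]
    by (simp add: sums_iff w_def)
  moreover have "(\<Sum>i<N. c i) = (\<Sum>i<N. sb_weight v i * (indicator S (\<theta> i) - p))"
    by (simp add: c_def w_def)
  ultimately show ?thesis by linarith
qed

section \<open>Concentration of the Dirichlet process\<close>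

abbreviation iid_seq :: "'a measure \<Rightarrow> (nat \<Rightarrow> 'a) measure" where
  "iid_seq M \<equiv> PiM UNIV (\<lambda>_. M)"

lemma AE_iid_seq:
  assumes "prob_space M" "AE x in M. P x"
  shows "AE \<omega> in iid_seq M. \<forall>i. P (\<omega> i)"
proof -
  interpret product_prob_space "\<lambda>_::nat. M" UNIV
    using assms(1) by (simp add: product_prob_space_def product_sigma_finite_def
        product_prob_space_axioms_def prob_space_imp_sigma_finite)
  show ?thesis
    unfolding AE_all_countable using assms(2) by (intro allI AE_component) auto
qed

lemma integral_iid_seq_prod:
  fixes f :: "nat \<Rightarrow> 'a \<Rightarrow> real"
  assumes M: "prob_space M" and J: "finite J" and int: "\<And>i. i \<in> J \<Longrightarrow> integrable M (f i)"
  shows "(\<integral>\<omega>. (\<Prod>i\<in>J. f i (\<omega> i)) \<partial>iid_seq M) = (\<Prod>i\<in>J. \<integral>x. f i x \<partial>M)"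
proof -
  interpret P: product_prob_space "\<lambda>_::nat. M" UNIV
    using M by (simp add: product_prob_space_def product_sigma_finite_def
        product_prob_space_axioms_def prob_space_imp_sigma_finite)
  have [measurable]: "f i \<in> borel_measurable M" if "i \<in> J" for i
    using int[OF that] by auto
  have "(\<lambda>\<omega>. \<Prod>i\<in>J. f i (\<omega> i)) \<in> borel_measurable (PiM J (\<lambda>_. M))"
    by (intro borel_measurable_prod measurable_compose[OF measurable_component_singleton]) auto
  then have "(\<integral>\<omega>. (\<Prod>i\<in>J. f i (\<omega> i)) \<partial>PiM J (\<lambda>_. M))
      = (\<integral>\<omega>. (\<Prod>i\<in>J. f i (restrict \<omega> J i)) \<partial>iid_seq M)"
    using J by (subst P.distr_PiM_restrict_finite[symmetric, of J])
      (auto simp: integral_distr[OF measurable_restrict_subset])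
  also have "\<dots> = (\<integral>\<omega>. (\<Prod>i\<in>J. f i (\<omega> i)) \<partial>iid_seq M)"
    by (intro Bochner_Integration.integral_cong refl prod.cong) auto
  finally show ?thesis
    using P.product_integral_prod[OF J int] by simp
qed

lemma iid_seq_centred_products:
  fixes g :: "'a \<Rightarrow> real"
  assumes M: "prob_space M"
    and g: "g \<in> borel_measurable M" "\<And>x. \<bar>g x\<bar> \<le> 1" "(\<integral>x. g x \<partial>M) = 0"
  shows "integrable (iid_seq M) (\<lambda>\<theta>. g (\<theta> i) * g (\<theta> j))"
    and "i \<noteq> j \<Longrightarrow> (\<integral>\<theta>. g (\<theta> i) * g (\<theta> j) \<partial>iid_seq M) = 0"
    and "(\<integral>\<theta>. g (\<theta> i) * g (\<theta> i) \<partial>iid_seq M) \<le> 1"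
proof -
  interpret M: prob_space M by (fact M)
  interpret T: prob_space "iid_seq M" by (intro prob_space_PiM M)
  have gg: "\<bar>g x * g y\<bar> \<le> 1" for x y
    using g(2)[of x] g(2)[of y] mult_le_one[of "\<bar>g x\<bar>" "\<bar>g y\<bar>"] by (simp add: abs_mult)
  show int: "integrable (iid_seq M) (\<lambda>\<theta>. g (\<theta> i) * g (\<theta> j))" for i j
    using gg g(1) by (intro T.integrable_const_bound[where B=1]) auto
  have "(\<integral>\<theta>. (\<Prod>k\<in>{i, j}. g (\<theta> k)) \<partial>iid_seq M) = (\<Prod>k\<in>{i, j}. \<integral>x. g x \<partial>M)"
    using g by (intro integral_iid_seq_prod M M.integrable_const_bound[where B=1]) auto
  then show "i \<noteq> j \<Longrightarrow> (\<integral>\<theta>. g (\<theta> i) * g (\<theta> j) \<partial>iid_seq M) = 0"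
    using g(3) by simp
  show "(\<integral>\<theta>. g (\<theta> i) * g (\<theta> i) \<partial>iid_seq M) \<le> 1"
    using gg by (intro T.integral_le_const int AE_I2) (auto simp: abs_le_iff)
qed

lemma integral_pair_measure_mult:
  fixes f :: "'a \<Rightarrow> real" and g :: "'b \<Rightarrow> real"
  assumes M1: "prob_space M1" and M2: "prob_space M2"
    and f: "integrable M1 f" and g: "integrable M2 g"
  shows "integrable (M1 \<Otimes>\<^sub>M M2) (\<lambda>x. f (fst x) * g (snd x))"
    and "(\<integral>x. f (fst x) * g (snd x) \<partial>(M1 \<Otimes>\<^sub>M M2)) = (\<integral>x. f x \<partial>M1) * (\<integral>y. g y \<partial>M2)"
proof -
  interpret p: pair_prob_space M1 M2
    using M1 M2 by (simp add: pair_prob_space_def pair_sigma_finite_def prob_space_imp_sigma_finite)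
  have [measurable]: "f \<in> borel_measurable M1" "g \<in> borel_measurable M2"
    using f g by auto
  show int: "integrable (M1 \<Otimes>\<^sub>M M2) (\<lambda>x. f (fst x) * g (snd x))"
  proof (rule p.Fubini_integrable)
    have "integrable M1 (\<lambda>x. norm (f x) * (\<integral>y. norm (g y) \<partial>M2))"
      using f by (intro integrable_mult_left integrable_norm)
    then show "integrable M1 (\<lambda>x. \<integral>y. norm (f (fst (x, y)) * g (snd (x, y))) \<partial>M2)"
      by (simp add: abs_mult)
  qed (use g in auto)
  show "(\<integral>x. f (fst x) * g (snd x) \<partial>(M1 \<Otimes>\<^sub>M M2)) = (\<integral>x. f x \<partial>M1) * (\<integral>y. g y \<partial>M2)"
    using p.integral_fst'[OF int] by simp
qed

lemma (in prob_space) expectation_abs_le_sqrt: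
  assumes "integrable M X" "integrable M (\<lambda>x. (X x)\<^sup>2)"
  shows "expectation (\<lambda>x. \<bar>X x\<bar>) \<le> sqrt (expectation (\<lambda>x. (X x)\<^sup>2))"
proof -
  have "0 \<le> variance (\<lambda>x. \<bar>X x\<bar>)" by (rule variance_positive)
  also have "variance (\<lambda>x. \<bar>X x\<bar>) = expectation (\<lambda>x. \<bar>X x\<bar>\<^sup>2) - (expectation (\<lambda>x. \<bar>X x\<bar>))\<^sup>2"
    using assms by (intro variance_eq) auto
  finally show ?thesis
    by (simp add: real_le_rsqrt)
qed

context
  fixes a :: real
  assumes a: "a > 0"
begin

lemma prob_space_beta1_seq: "prob_space (iid_seq (beta1 a))"
  by (intro prob_space_PiM prob_space_beta1 a)

lemma AE_beta1_seq: "AE v in iid_seq (beta1 a). \<forall>i. 0 \<le> v i \<and> v i \<le> 1"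
  using AE_iid_seq[OF prob_space_beta1[OF a] AE_beta1[of a]] by eventually_elim (simp add: less_imp_le)

lemma sb_remainder_measurable [measurable]: "sb_remainder N \<in> borel_measurable (iid_seq (beta1 a))"
  unfolding sb_remainder_def by measurable

lemma sb_weight_measurable [measurable]: "(\<lambda>v. sb_weight v i) \<in> borel_measurable (iid_seq (beta1 a))"
  unfolding sb_weight_def by measurable

lemma integrable_beta1_seq_bounded:
  fixes f :: "(nat \<Rightarrow> real) \<Rightarrow> real"
  assumes "f \<in> borel_measurable (iid_seq (beta1 a))"
    and "\<And>v. \<forall>i. 0 \<le> v i \<and> v i \<le> 1 \<Longrightarrow> \<bar>f v\<bar> \<le> 1"
  shows "integrable (iid_seq (beta1 a)) f"
proof -
  interpret prob_space "iid_seq (beta1 a)" by (rule prob_space_beta1_seq)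
  show ?thesis
    using AE_beta1_seq assms by (intro integrable_const_bound[where B=1]) (auto elim: eventually_mono)
qed

lemma integrable_sb_remainder: "integrable (iid_seq (beta1 a)) (sb_remainder N)"
  by (intro integrable_beta1_seq_bounded) (auto simp: sb_remainder_nonneg sb_remainder_le_1)

lemma integrable_sb_weight_mult:
  "integrable (iid_seq (beta1 a)) (\<lambda>v. sb_weight v i * sb_weight v j)"
  by (intro integrable_beta1_seq_bounded)
    (auto simp: abs_mult sb_weight_nonneg sb_weight_le_1 intro!: mult_le_one)

lemma integral_sb_remainder: "(\<integral>v. sb_remainder N v \<partial>iid_seq (beta1 a)) = (a / (a + 1)) ^ N"
  unfolding sb_remainder_def
  using integral_beta1_moment[OF a, of 1]
  by (subst integral_iid_seq_prod[OF prob_space_beta1[OF a]])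
    (auto intro!: integrable_beta1_bounded[OF a, where B=1])

text \<open>The expected remaining stick decays geometrically, so almost surely the weights sum to one.\<close>

lemma AE_sb_proper: "AE v in iid_seq (beta1 a). sb_proper v"
proof -
  let ?B = "iid_seq (beta1 a)"
  define r where "r v = (INF N. ennreal (sb_remainder N v))" for v
  have [measurable]: "r \<in> borel_measurable ?B"
    unfolding r_def by measurable
  have le: "(\<integral>\<^sup>+v. r v \<partial>?B) \<le> ennreal ((a / (a + 1)) ^ N)" for N
  proof -
    have "(\<integral>\<^sup>+v. r v \<partial>?B) \<le> (\<integral>\<^sup>+v. ennreal (sb_remainder N v) \<partial>?B)"
      unfolding r_def by (intro nn_integral_mono INF_lower) auto
    also have "\<dots> = ennreal ((a / (a + 1)) ^ N)"
      using AE_beta1_seq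
      by (subst nn_integral_eq_integral[OF integrable_sb_remainder])
        (auto elim!: eventually_mono simp: sb_remainder_nonneg integral_sb_remainder)
    finally show ?thesis .
  qed
  have "(\<lambda>N. ennreal ((a / (a + 1)) ^ N)) \<longlonglongrightarrow> ennreal 0"
    using a by (intro tendsto_ennrealI LIMSEQ_power_zero) auto
  then have "(\<integral>\<^sup>+v. r v \<partial>?B) = 0"
    using le by (intro antisym LIMSEQ_le_const[where a="\<integral>\<^sup>+v. r v \<partial>?B"]) auto
  then have "AE v in ?B. r v = 0"
    by (simp add: nn_integral_0_iff_AE)
  then show ?thesis
    using AE_beta1_seq
  proof eventually_elim
    case (elim v)
    have "decseq (\<lambda>N. ennreal (sb_remainder N v))"
      using sb_remainder_decseq[OF elim(2)] by (auto simp: decseq_def intro: ennreal_leI)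
    then have "(\<lambda>N. ennreal (sb_remainder N v)) \<longlonglongrightarrow> ennreal 0"
      using LIMSEQ_INF elim(1) by (fastforce simp: r_def)
    then have "(\<lambda>N. sb_remainder N v) \<longlonglongrightarrow> 0"
      using sb_remainder_nonneg[OF elim(2)] by (subst (asm) tendsto_ennreal_iff) auto
    then show ?case
      by (rule sb_properI[OF elim(2)])
  qed
qed

lemma integral_sb_weight_square:
  "(\<integral>v. (sb_weight v i)\<^sup>2 \<partial>iid_seq (beta1 a)) = 2 / ((a + 1) * (a + 2)) * (a / (a + 2)) ^ i"
proof -
  define h where "h j x = (if j = i then x\<^sup>2 else (1 - x)\<^sup>2)" for j :: nat and x :: real
  have "(sb_weight v i)\<^sup>2 = (\<Prod>j<Suc i. h j (v j))" for v
    unfolding sb_weight_def h_def by (simp add: power_mult_distrib prod_power_distrib)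
  then have "(\<integral>v. (sb_weight v i)\<^sup>2 \<partial>iid_seq (beta1 a)) = (\<Prod>j<Suc i. \<integral>x. h j x \<partial>beta1 a)"
    unfolding h_def
    by (subst integral_iid_seq_prod[OF prob_space_beta1[OF a], symmetric])
      (auto intro!: integrable_beta1_bounded[OF a, where B=1] simp: power_le_one abs_le_iff)
  also have "\<dots> = (\<Prod>j<i. a / (a + 2)) * (2 / ((a + 1) * (a + 2)))"
    using integral_beta1_moment[OF a, of 2] integral_beta1_square[OF a]
    by (simp add: h_def)
  finally show ?thesis by simp
qed

lemma sum_integral_sb_weight_square_le:
  "(\<Sum>i<N. \<integral>v. (sb_weight v i)\<^sup>2 \<partial>iid_seq (beta1 a)) \<le> 1 / (a + 1)"
proof -
  define q where "q = a / (a + 2)"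
  have q: "0 \<le> q" "q < 1" "1 - q = 2 / (a + 2)"
    using a by (auto simp: q_def field_simps)
  have "(\<Sum>i<N. q ^ i) = (1 - q ^ N) / (1 - q)"
    using q by (subst sum_gp_strict) auto
  also have "\<dots> \<le> 1 / (1 - q)"
    using q a by (intro divide_right_mono) auto
  finally have "2 / ((a + 1) * (a + 2)) * (\<Sum>i<N. q ^ i) \<le> 2 / ((a + 1) * (a + 2)) * (1 / (1 - q))"
    using a by (intro mult_left_mono) auto
  also have "\<dots> = 1 / (a + 1)"
    using a unfolding q(3) by (simp add: divide_simps)
  finally show ?thesis
    by (simp add: integral_sb_weight_square sum_distrib_left q_def)
qed

end

text \<open>In the second moment of the truncated sum the cross terms vanish, since the atoms are
  independent and \<open>g\<close> is centred; the diagonal is bounded by \<open>\<Sum>\<^sub>i E w\<^sub>i\<^sup>2 \<le> 1/(a+1)\<close>.\<close>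

lemma sb_sum_second_moment_le:
  fixes g :: "real \<Rightarrow> real"
  assumes a: "a > 0" and F0: "prob_space F0" "sets F0 = sets borel"
    and g: "g \<in> borel_measurable borel" "\<And>y. \<bar>g y\<bar> \<le> 1" "(\<integral>y. g y \<partial>F0) = 0"
  defines "\<Omega> \<equiv> iid_seq (beta1 a) \<Otimes>\<^sub>M iid_seq F0"
  shows "integrable \<Omega> (\<lambda>\<omega>. (\<Sum>i<N. sb_weight (fst \<omega>) i * g (snd \<omega> i))\<^sup>2)"
    and "(\<integral>\<omega>. (\<Sum>i<N. sb_weight (fst \<omega>) i * g (snd \<omega> i))\<^sup>2 \<partial>\<Omega>) \<le> 1 / (a + 1)"
proof -
  let ?B = "iid_seq (beta1 a)" and ?T = "iid_seq F0"
  let ?f = "\<lambda>i j \<omega>. (sb_weight (fst \<omega>) i * sb_weight (fst \<omega>) j) * (g (snd \<omega> i) * g (snd \<omega> j))"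
  define EB where "EB i = (\<integral>v. sb_weight v i * sb_weight v i \<partial>?B)" for i
  define ET where "ET i = (\<integral>\<theta>. g (\<theta> i) * g (\<theta> i) \<partial>?T)" for i
  note gT = iid_seq_centred_products[OF F0(1) g[unfolded measurable_cong_sets[OF F0(2)[symmetric] refl]]]
  have summand: "integrable \<Omega> (?f i j)" "integral\<^sup>L \<Omega> (?f i j) = (if i = j then EB i * ET i else 0)" for i j
  proof -
    note pm = integral_pair_measure_mult[OF prob_space_beta1_seq[OF a] prob_space_PiM[OF F0(1)]
        integrable_sb_weight_mult[OF a] gT(1), of i j i j, folded \<Omega>_def]
    show "integrable \<Omega> (?f i j)" by (fact pm(1))
    show "integral\<^sup>L \<Omega> (?f i j) = (if i = j then EB i * ET i else 0)"
      using pm(2) gT(2)[of i j] by (cases "i = j") (simp_all add: EB_def ET_def)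
  qed
  have square: "(\<Sum>i<N. sb_weight (fst \<omega>) i * g (snd \<omega> i))\<^sup>2 = (\<Sum>i<N. \<Sum>j<N. ?f i j \<omega>)" for \<omega>
    unfolding power2_eq_square sum_product by (simp add: mult_ac)
  show "integrable \<Omega> (\<lambda>\<omega>. (\<Sum>i<N. sb_weight (fst \<omega>) i * g (snd \<omega> i))\<^sup>2)"
    unfolding square by (intro Bochner_Integration.integrable_sum summand)
  have "(\<integral>\<omega>. (\<Sum>i<N. sb_weight (fst \<omega>) i * g (snd \<omega> i))\<^sup>2 \<partial>\<Omega>) = (\<Sum>i<N. \<Sum>j<N. if i = j then EB i * ET i else 0)"
    unfolding square summand(2)[symmetric]
    by (subst Bochner_Integration.integral_sum)
      (auto intro!: Bochner_Integration.integrable_sum summand sum.cong Bochner_Integration.integral_sum)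
  also have "\<dots> \<le> (\<Sum>i<N. EB i)"
    using gT(3) by (simp add: sum.delta' ET_def)
      (intro sum_mono mult_right_le_one_le, auto simp: EB_def intro!: integral_nonneg_AE)
  also have "\<dots> \<le> 1 / (a + 1)"
    using sum_integral_sb_weight_square_le[OF a] by (simp add: EB_def power2_eq_square)
  finally show "(\<integral>\<omega>. (\<Sum>i<N. sb_weight (fst \<omega>) i * g (snd \<omega> i))\<^sup>2 \<partial>\<Omega>) \<le> 1 / (a + 1)" .
qed

lemma sb_sum_abs_moment_le:
  fixes g :: "real \<Rightarrow> real"
  assumes a: "a > 0" and F0: "prob_space F0" "sets F0 = sets borel"
    and g: "g \<in> borel_measurable borel" "\<And>y. \<bar>g y\<bar> \<le> 1" "(\<integral>y. g y \<partial>F0) = 0"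
  defines "\<Omega> \<equiv> iid_seq (beta1 a) \<Otimes>\<^sub>M iid_seq F0"
  shows "integrable \<Omega> (\<lambda>\<omega>. \<Sum>i<N. sb_weight (fst \<omega>) i * g (snd \<omega> i))"
    and "(\<integral>\<omega>. \<bar>\<Sum>i<N. sb_weight (fst \<omega>) i * g (snd \<omega> i)\<bar> \<partial>\<Omega>) \<le> sqrt (1 / (a + 1))"
proof -
  interpret T: prob_space "iid_seq F0" by (intro prob_space_PiM F0)
  interpret \<Omega>: prob_space \<Omega> unfolding \<Omega>_def by (intro prob_space_pair prob_space_beta1_seq a T.prob_space_axioms)
  have [measurable_cong]: "sets F0 = sets borel" by (fact F0(2))
  have "integrable (iid_seq F0) (\<lambda>\<theta>. g (\<theta> i))" for i
    using g by (intro T.integrable_const_bound[where B=1]) auto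
  moreover have "integrable (iid_seq (beta1 a)) (\<lambda>v. sb_weight v i)" for i
    using a by (intro integrable_beta1_seq_bounded) (auto simp: sb_weight_nonneg sb_weight_le_1)
  ultimately show int: "integrable \<Omega> (\<lambda>\<omega>. \<Sum>i<N. sb_weight (fst \<omega>) i * g (snd \<omega> i))"
    unfolding \<Omega>_def
    by (intro Bochner_Integration.integrable_sum integral_pair_measure_mult(1) prob_space_beta1_seq a
        T.prob_space_axioms)
  have "(\<integral>\<omega>. \<bar>\<Sum>i<N. sb_weight (fst \<omega>) i * g (snd \<omega> i)\<bar> \<partial>\<Omega>)
      \<le> sqrt (\<integral>\<omega>. (\<Sum>i<N. sb_weight (fst \<omega>) i * g (snd \<omega> i))\<^sup>2 \<partial>\<Omega>)"
    using int sb_sum_second_moment_le(1)[OF a F0 g] unfolding \<Omega>_def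
    by (intro \<Omega>.expectation_abs_le_sqrt[unfolded \<Omega>_def])
  also have "\<dots> \<le> sqrt (1 / (a + 1))"
    using sb_sum_second_moment_le(2)[OF a F0 g] unfolding \<Omega>_def by simp
  finally show "(\<integral>\<omega>. \<bar>\<Sum>i<N. sb_weight (fst \<omega>) i * g (snd \<omega> i)\<bar> \<partial>\<Omega>) \<le> sqrt (1 / (a + 1))" .
qed

lemma AE_fst_pair_measure:
  assumes "prob_space N" "AE x in M. P x"
  shows "AE \<omega> in M \<Otimes>\<^sub>M N. P (fst \<omega>)"
proof (rule AE_distrD[OF measurable_fst])
  show "AE x in distr (M \<Otimes>\<^sub>M N) M fst. P x"
    unfolding prob_space.distr_pair_fst[OF assms(1)] by (rule assms(2))
qed

lemma centred_indicator:
  assumes F0: "real_distribution F0" and S: "S \<in> sets borel"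
  shows "(\<lambda>y. indicator S y - measure F0 S) \<in> borel_measurable borel"
    and "\<bar>indicator S y - measure F0 S\<bar> \<le> 1"
    and "(\<integral>y. indicator S y - measure F0 S \<partial>F0) = 0"
proof -
  interpret F0: real_distribution F0 by (fact F0)
  show "(\<lambda>y. indicator S y - measure F0 S) \<in> borel_measurable borel"
    using S by measurable
  show "\<bar>indicator S y - measure F0 S\<bar> \<le> 1"
    by (auto simp: indicator_def)
  have "(\<integral>y. indicator S y - measure F0 S \<partial>F0) = (\<integral>y. indicator S y \<partial>F0) - (\<integral>y. measure F0 S \<partial>F0)"
    using S by (intro Bochner_Integration.integral_diff)
      (auto intro!: integrable_real_indicator simp: less_top[symmetric])
  then show "(\<integral>y. indicator S y - measure F0 S \<partial>F0) = 0"
    using S F0.prob_space by simp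
qed

lemma integral_abs_sb_measure_deviation_le_remainder:
  assumes a: "a > 0" and F0: "real_distribution F0" and S: "S \<in> sets borel"
  defines "\<Omega> \<equiv> iid_seq (beta1 a) \<Otimes>\<^sub>M iid_seq F0"
  shows "(\<integral>\<omega>. \<bar>measure (sb_measure (fst \<omega>) (snd \<omega>)) S - measure F0 S\<bar> \<partial>\<Omega>)
    \<le> sqrt (1 / (a + 1)) + (a / (a + 1)) ^ N"
proof -
  interpret F0: real_distribution F0 by (fact F0)
  interpret T: prob_space "iid_seq F0" by (intro prob_space_PiM F0.prob_space_axioms)
  interpret \<Omega>: prob_space \<Omega> unfolding \<Omega>_def by (intro prob_space_pair prob_space_beta1_seq a T.prob_space_axioms)
  let ?g = "\<lambda>y. indicator S y - measure F0 S"
  let ?dev = "\<lambda>\<omega>. \<bar>measure (sb_measure (fst \<omega>) (snd \<omega>)) S - measure F0 S\<bar>"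
  note sum = sb_sum_abs_moment_le[OF a F0.prob_space_axioms F0.events_eq_borel centred_indicator[OF F0 S],
      of N, folded \<Omega>_def]
  have "?dev \<in> borel_measurable \<Omega>"
    using measurable_compose[OF sb_measure_measurable[OF sets_beta1 F0.events_eq_borel]
        measurable_measure_prob_algebra[OF S]]
    unfolding \<Omega>_def by measurable
  then have int: "integrable \<Omega> ?dev"
    using abs_measure_diff_le_1[OF prob_space_sb_measure F0.prob_space_axioms]
    by (intro \<Omega>.integrable_const_bound[where B=1]) auto
  have proper: "AE \<omega> in \<Omega>. sb_proper (fst \<omega>)"
    unfolding \<Omega>_def by (intro AE_fst_pair_measure AE_sb_proper a T.prob_space_axioms)
  have rem: "integrable \<Omega> (\<lambda>\<omega>. sb_remainder N (fst \<omega>))"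
    "(\<integral>\<omega>. sb_remainder N (fst \<omega>) \<partial>\<Omega>) = (a / (a + 1)) ^ N"
    using integral_pair_measure_mult[OF prob_space_beta1_seq[OF a] T.prob_space_axioms
        integrable_sb_remainder[OF a] T.integrable_const[of 1]]
    by (simp_all add: \<Omega>_def integral_sb_remainder[OF a] T.prob_space)
  have "integral\<^sup>L \<Omega> ?dev \<le> (\<integral>\<omega>. \<bar>\<Sum>i<N. sb_weight (fst \<omega>) i * ?g (snd \<omega> i)\<bar> + sb_remainder N (fst \<omega>) \<partial>\<Omega>)"
    using proper int sum(1) rem(1)
    by (intro integral_mono_AE) (auto elim!: eventually_mono intro: sb_measure_deviation_le[OF _ S])
  also have "\<dots> \<le> sqrt (1 / (a + 1)) + (a / (a + 1)) ^ N"
    using sum rem by simp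
  finally show ?thesis .
qed

lemma integral_abs_sb_measure_deviation_le:
  assumes a: "a > 0" and F0: "real_distribution F0" and S: "S \<in> sets borel"
  shows "(\<integral>\<omega>. \<bar>measure (sb_measure (fst \<omega>) (snd \<omega>)) S - measure F0 S\<bar> \<partial>(iid_seq (beta1 a) \<Otimes>\<^sub>M iid_seq F0))
    \<le> sqrt (1 / (a + 1))"
proof (rule LIMSEQ_le_const)
  have "(\<lambda>N. sqrt (1 / (a + 1)) + (a / (a + 1)) ^ N) \<longlonglongrightarrow> sqrt (1 / (a + 1)) + 0"
    using a by (intro tendsto_add tendsto_const LIMSEQ_power_zero) auto
  then show "(\<lambda>N. sqrt (1 / (a + 1)) + (a / (a + 1)) ^ N) \<longlonglongrightarrow> sqrt (1 / (a + 1))"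
    by simp
qed (use integral_abs_sb_measure_deviation_le_remainder[OF assms] in blast)

lemma DP_eq_distr_sb_measure:
  "DP a F0 = distr (iid_seq (beta1 a) \<Otimes>\<^sub>M iid_seq F0) (prob_algebra borel) (\<lambda>x. sb_measure (fst x) (snd x))"
  unfolding DP_def case_prod_beta' ..

lemma sets_DP [simp, measurable_cong]: "sets (DP a F0) = sets (prob_algebra borel)"
  unfolding DP_def by simp

lemma space_DP [simp]: "space (DP a F0) = space (prob_algebra borel)"
  using sets_DP by (rule sets_eq_imp_space_eq)

lemma prob_space_DP:
  assumes "a > 0" "real_distribution F0"
  shows "prob_space (DP a F0)"
  unfolding DP_eq_distr_sb_measure using assms
  by (intro prob_space.prob_space_distr prob_space_pair prob_space_beta1_seq prob_space_PiM
      sb_measure_measurable sets_beta1) (auto simp: real_distribution_def real_distribution_axioms_def)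

lemma integral_DP_abs_measure_deviation_le:
  assumes "a > 0" "real_distribution F0" "S \<in> sets borel"
  shows "(\<integral>P. \<bar>measure P S - measure F0 S\<bar> \<partial>DP a F0) \<le> sqrt (1 / (a + 1))"
proof -
  have "(\<lambda>P. \<bar>measure P S - measure F0 S\<bar>) \<in> borel_measurable (prob_algebra borel)"
    using measurable_measure_prob_algebra[OF assms(3)] by measurable
  then show ?thesis
    using assms integral_abs_sb_measure_deviation_le[OF assms]
    by (simp add: DP_eq_distr_sb_measure integral_distr sb_measure_measurable real_distribution_def
        real_distribution_axioms_def)
qed

section \<open>Bracketing the Kolmogorov distance\<close>

lemma cdf_quantile:
  assumes H: "real_distribution H" and c: "0 < c" "c < 1"
  defines "q \<equiv> Inf {t. c \<le> cdf H t}"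
  shows "c \<le> cdf H q" and "\<And>t. t < q \<Longrightarrow> cdf H t < c" and "measure H {..<q} \<le> c"
proof -
  interpret real_distribution H by fact
  let ?A = "{t. c \<le> cdf H t}"
  have "eventually (\<lambda>t. c < cdf H t) at_top"
    by (rule order_tendstoD(1)[OF cdf_lim_at_top_prob c(2)])
  then obtain t0 where "c < cdf H t0" by (auto simp: eventually_at_top_linorder)
  then have ne: "?A \<noteq> {}" by (auto intro!: exI[of _ t0])
  have "eventually (\<lambda>t. cdf H t < c) at_bot"
    by (rule order_tendstoD(2)[OF cdf_lim_at_bot c(1)])
  then obtain b where b: "\<And>t. t \<le> b \<Longrightarrow> cdf H t < c" by (auto simp: eventually_at_bot_linorder)
  have bdd: "bdd_below ?A"
  proof (rule bdd_belowI[where m=b])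
    fix x assume "x \<in> ?A"
    then show "b \<le> x" using b[of x] by (cases "x \<le> b") auto
  qed
  show below: "cdf H t < c" if "t < q" for t
  proof (rule ccontr)
    assume "\<not> cdf H t < c"
    then have "q \<le> t" unfolding q_def by (intro cInf_lower[OF _ bdd]) simp
    with that show False by simp
  qed
  have "eventually (\<lambda>s. c \<le> cdf H s) (at_right q)"
  proof (rule eventually_at_rightI[where b="q + 1"])
    fix s assume "s \<in> {q<..<q + 1}"
    then obtain t where "t \<in> ?A" "t < s"
      using cInf_less_iff[OF ne bdd] unfolding q_def by auto
    then show "c \<le> cdf H s" using cdf_nondecreasing[of t s] by simp
  qed simp
  then show "c \<le> cdf H q"
    using cdf_is_right_cont[of q] by (intro tendsto_lowerbound) (auto simp: continuous_within)
  have "eventually (\<lambda>s. cdf H s \<le> c) (at_left q)"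
    using below by (intro eventually_at_leftI[where a="q - 1"]) (auto intro: less_imp_le)
  then show "measure H {..<q} \<le> c"
    using cdf_at_left[of q] by (intro tendsto_upperbound) auto
qed

text \<open>The quantiles at levels \<open>j/k\<close> cut the line into pieces of \<open>H\<close>-mass at most \<open>1/k\<close>; every
  half-line \<open>{..t}\<close> is sandwiched between two members of this finite family.\<close>

lemma quantile_bracket:
  fixes k :: nat and t :: real
  assumes H: "real_distribution H" and k: "k > 0"
  defines "q \<equiv> \<lambda>j. Inf {t. real j / k \<le> cdf H t}"
  defines "L \<equiv> \<lambda>j. if j = 0 then {} else {..q j}"
    and "U \<equiv> \<lambda>j. if j = k then UNIV else {..<q j}"
  obtains j where "j < k" "L j \<subseteq> {..t}" "{..t} \<subseteq> U (Suc j)"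
    "measure H (U (Suc j)) - measure H (L j) \<le> 1 / k"
proof -
  interpret real_distribution H by fact
  have qj: "real j / k \<le> cdf H (q j)" "\<And>t. t < q j \<Longrightarrow> cdf H t < real j / k"
      "measure H {..<q j} \<le> real j / k" if "0 < j" "j < k" for j
    using cdf_quantile[OF H, of "real j / k"] that unfolding q_def by auto
  define J where "J = {j. j < k \<and> (j = 0 \<or> q j \<le> t)}"
  define j where "j = Max J"
  have J: "finite J" "0 \<in> J" using k by (auto simp: J_def)
  then have "j \<in> J" unfolding j_def by (intro Max_in) auto
  then have j: "j < k" "L j \<subseteq> {..t}" by (auto simp: J_def L_def)
  have "Suc j \<notin> J"
  proof
    assume "Suc j \<in> J"
    then have "Suc j \<le> j" unfolding j_def using Max_ge[OF J(1)] by blast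
    then show False by simp
  qed
  then have "{..t} \<subseteq> U (Suc j)" using j(1) by (auto simp: J_def U_def not_le)
  moreover have "real j / k \<le> measure H (L j)"
    using qj(1)[of j] j(1) by (auto simp: L_def cdf_def)
  moreover have "measure H (U (Suc j)) \<le> real (Suc j) / k"
    using qj(3)[of "Suc j"] j(1) k by (auto simp: U_def prob_space)
  ultimately show thesis
    using that[OF j] k by (simp add: add_divide_distrib)
qed

lemma abs_measure_atMost_diff_le_bracket:
  fixes L U :: "real set"
  assumes "prob_space P" "sets P = sets borel" "prob_space H" "sets H = sets borel"
    and "L \<in> sets borel" "U \<in> sets borel" "L \<subseteq> {..t}" "{..t} \<subseteq> U"
    and "measure H U - measure H L \<le> e"
    and "\<bar>measure P L - measure H L\<bar> \<le> s" "\<bar>measure P U - measure H U\<bar> \<le> s"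
  shows "\<bar>measure P {..t} - measure H {..t}\<bar> \<le> s + e"
proof -
  have "measure M L \<le> measure M {..t}" "measure M {..t} \<le> measure M U"
    if "prob_space M" "sets M = sets borel" for M :: "real measure"
    using assms(5-8) that
    by (auto intro!: finite_measure.finite_measure_mono prob_space.finite_measure)
  from this[OF assms(1,2)] this[OF assms(3,4)] assms(9-) show ?thesis
    unfolding abs_le_iff by linarith
qed

lemma kolmogorov_dist_bracketing:
  assumes H: "real_distribution H" and e: "e > 0"
  shows "\<exists>\<F>. finite \<F> \<and> \<F> \<subseteq> sets borel \<and> (\<forall>P. prob_space P \<longrightarrow> sets P = sets borel
      \<longrightarrow> kolmogorov_dist P H \<le> (\<Sum>S\<in>\<F>. \<bar>measure P S - measure H S\<bar>) + e)"
proof -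
  interpret real_distribution H by fact
  obtain k :: nat where k: "1 / e < k" using reals_Archimedean2 by blast
  moreover have "0 < 1 / e" using e by simp
  ultimately have k0: "k > 0" by linarith
  have ke: "1 / k \<le> e"
    using k e k0 by (simp add: field_simps)
  define q where "q = (\<lambda>j. Inf {t. real j / k \<le> cdf H t})"
  define L where "L = (\<lambda>j. if j = 0 then {} else {..q j})"
  define U where "U = (\<lambda>j. if j = k then UNIV else {..<q j})"
  define \<F> where "\<F> = L ` {..<k} \<union> U ` {1..k}"
  have \<F>: "finite \<F>" "\<F> \<subseteq> sets borel" by (auto simp: \<F>_def L_def U_def)
  moreover have "kolmogorov_dist P H \<le> (\<Sum>S\<in>\<F>. \<bar>measure P S - measure H S\<bar>) + e"
    if P: "prob_space P" "sets P = sets borel" for P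
  proof (rule kolmogorov_dist_le)
    fix t
    obtain j where j: "j < k" "L j \<subseteq> {..t}" "{..t} \<subseteq> U (Suc j)"
      "measure H (U (Suc j)) - measure H (L j) \<le> 1 / k"
      using quantile_bracket[OF H k0, of t] unfolding q_def L_def U_def by blast
    have LU: "L j \<in> \<F>" "U (Suc j) \<in> \<F>" using j(1) by (auto simp: \<F>_def)
    have "\<bar>measure P S - measure H S\<bar> \<le> (\<Sum>S\<in>\<F>. \<bar>measure P S - measure H S\<bar>)" if "S \<in> \<F>" for S
      using that \<F>(1) by (intro member_le_sum) auto
    with LU \<F>(2) have "\<bar>measure P {..t} - measure H {..t}\<bar> \<le> (\<Sum>S\<in>\<F>. \<bar>measure P S - measure H S\<bar>) + 1 / k"
      by (intro abs_measure_atMost_diff_le_bracket[OF P prob_space_axioms events_eq_borel _ _ j(2,3,4)]) auto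
    with ke show "\<bar>measure P {..t} - measure H {..t}\<bar> \<le> (\<Sum>S\<in>\<F>. \<bar>measure P S - measure H S\<bar>) + e"
      by linarith
  qed
  ultimately show ?thesis by blast
qed

definition kolmogorov_brackets :: "real measure \<Rightarrow> real set set \<Rightarrow> bool" where
  "kolmogorov_brackets H \<F> \<longleftrightarrow> \<F> \<subseteq> sets borel \<and>
    (\<forall>e>0. \<exists>F\<subseteq>\<F>. finite F \<and> (\<forall>P. prob_space P \<longrightarrow> sets P = sets borel \<longrightarrow>
      kolmogorov_dist P H \<le> (\<Sum>S\<in>F. \<bar>measure P S - measure H S\<bar>) + e))"

lemma countable_kolmogorov_brackets:
  assumes "real_distribution H"
  obtains \<F> where "countable \<F>" "kolmogorov_brackets H \<F>"
proof -
  have "\<forall>k::nat. \<exists>F. finite F \<and> F \<subseteq> sets borel \<and> (\<forall>P. prob_space P \<longrightarrow> sets P = sets borel \<longrightarrow>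
      kolmogorov_dist P H \<le> (\<Sum>S\<in>F. \<bar>measure P S - measure H S\<bar>) + 1 / Suc k)"
    using kolmogorov_dist_bracketing[OF assms] by simp
  then obtain F where "\<forall>k. finite (F k) \<and> F k \<subseteq> sets borel \<and> (\<forall>P. prob_space P \<longrightarrow> sets P = sets borel
      \<longrightarrow> kolmogorov_dist P H \<le> (\<Sum>S\<in>F k. \<bar>measure P S - measure H S\<bar>) + 1 / Suc k)"
    by (auto dest: choice)
  then have F: "\<And>k. finite (F k)" "\<And>k. F k \<subseteq> sets borel"
    "\<And>k P. prob_space P \<Longrightarrow> sets P = sets borel \<Longrightarrow>
      kolmogorov_dist P H \<le> (\<Sum>S\<in>F k. \<bar>measure P S - measure H S\<bar>) + 1 / Suc k"
    by blast+
  have "kolmogorov_brackets H (\<Union>k. F k)"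
    unfolding kolmogorov_brackets_def
  proof (intro conjI allI impI)
    fix e :: real assume "e > 0"
    then obtain k where k: "1 / Suc k < e" by (rule nat_approx_posE)
    have "kolmogorov_dist P H \<le> (\<Sum>S\<in>F k. \<bar>measure P S - measure H S\<bar>) + e"
      if "prob_space P" "sets P = sets borel" for P
      using F(3)[OF that, of k] k by linarith
    with F(1) show "\<exists>G\<subseteq>\<Union>k. F k. finite G \<and> (\<forall>P. prob_space P \<longrightarrow> sets P = sets borel \<longrightarrow>
        kolmogorov_dist P H \<le> (\<Sum>S\<in>G. \<bar>measure P S - measure H S\<bar>) + e)"
      by blast
  qed (use F(2) in blast)
  moreover have "countable (\<Union>k. F k)"
    by (intro countable_UN countableI_type countable_finite F(1))
  ultimately show thesis by (rule that[rotated])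
qed

section \<open>A strong law of large numbers for bounded uncorrelated variables\<close>

lemma (in prob_space) second_moment_sum_uncorrelated:
  fixes Y :: "nat \<Rightarrow> 'a \<Rightarrow> real"
  assumes meas: "\<And>i. Y i \<in> borel_measurable M" and bound: "\<And>i \<omega>. \<bar>Y i \<omega>\<bar> \<le> 1"
    and uncorrelated: "\<And>i j. i \<noteq> j \<Longrightarrow> (\<integral>\<omega>. Y i \<omega> * Y j \<omega> \<partial>M) = 0"
  shows "integrable M (\<lambda>\<omega>. (\<Sum>i<n. Y i \<omega>)\<^sup>2)" and "(\<integral>\<omega>. (\<Sum>i<n. Y i \<omega>)\<^sup>2 \<partial>M) \<le> n"
proof -
  have le1: "\<bar>Y i \<omega> * Y j \<omega>\<bar> \<le> 1" for i j \<omega>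
    using bound mult_le_one[of "\<bar>Y i \<omega>\<bar>" "\<bar>Y j \<omega>\<bar>"] by (simp add: abs_mult)
  have YY: "integrable M (\<lambda>\<omega>. Y i \<omega> * Y j \<omega>)" for i j
    using le1 meas by (intro integrable_const_bound[where B=1]) auto
  have square: "(\<Sum>i<n. Y i \<omega>)\<^sup>2 = (\<Sum>i<n. \<Sum>j<n. Y i \<omega> * Y j \<omega>)" for \<omega>
    unfolding power2_eq_square sum_product ..
  show "integrable M (\<lambda>\<omega>. (\<Sum>i<n. Y i \<omega>)\<^sup>2)"
    unfolding square by (intro Bochner_Integration.integrable_sum YY)
  have "(\<integral>\<omega>. (\<Sum>i<n. Y i \<omega>)\<^sup>2 \<partial>M) = (\<Sum>i<n. \<Sum>j<n. \<integral>\<omega>. Y i \<omega> * Y j \<omega> \<partial>M)"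
    unfolding square
    by (subst Bochner_Integration.integral_sum)
      (auto intro!: Bochner_Integration.integrable_sum YY sum.cong Bochner_Integration.integral_sum)
  also have "\<dots> = (\<Sum>i<n. \<Sum>j<n. if i = j then \<integral>\<omega>. Y i \<omega> * Y i \<omega> \<partial>M else 0)"
    using uncorrelated by (intro sum.cong) auto
  also have "\<dots> = (\<Sum>i<n. \<integral>\<omega>. Y i \<omega> * Y i \<omega> \<partial>M)"
    by (simp add: sum.delta')
  also have "\<dots> \<le> (\<Sum>i<n. 1)"
    by (intro sum_mono integral_le_const YY AE_I2) (use le1 in \<open>auto simp: abs_le_iff\<close>)
  finally show "(\<integral>\<omega>. (\<Sum>i<n. Y i \<omega>)\<^sup>2 \<partial>M) \<le> n" by simp
qed

text \<open>Chebyshev's inequality along the subsequence of squares gives summable exceptional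
  probabilities \<open>1/(\<epsilon>\<^sup>2 k\<^sup>2)\<close>, so Borel--Cantelli applies.\<close>

lemma (in prob_space) AE_eventually_square_subsequence_less:
  fixes D :: "nat \<Rightarrow> 'a \<Rightarrow> real"
  assumes meas[measurable]: "\<And>n. D n \<in> borel_measurable M" and int: "\<And>n. integrable M (\<lambda>\<omega>. (D n \<omega>)\<^sup>2)"
    and second: "\<And>n. (\<integral>\<omega>. (D n \<omega>)\<^sup>2 \<partial>M) \<le> n" and e: "e > 0"
  shows "AE \<omega> in M. eventually (\<lambda>k. (D (k\<^sup>2) \<omega>)\<^sup>2 < (e * (real k)\<^sup>2)\<^sup>2) sequentially"
proof -
  define A where "A k = {\<omega> \<in> space M. (e * (real (Suc k))\<^sup>2)\<^sup>2 \<le> (D ((Suc k)\<^sup>2) \<omega>)\<^sup>2}" for k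
  have A[measurable]: "A k \<in> sets M" for k
    unfolding A_def by measurable
  have cancel: "x / (e * x)\<^sup>2 = 1 / e\<^sup>2 * inverse x" if "x > 0" for x :: real
    using e that by (simp add: power2_eq_square field_simps)
  have mA: "measure M (A k) \<le> 1 / e\<^sup>2 * inverse ((real (Suc k))\<^sup>2)" for k
  proof -
    have "measure M (A k) \<le> (\<integral>\<omega>. (D ((Suc k)\<^sup>2) \<omega>)\<^sup>2 \<partial>M) / (e * (real (Suc k))\<^sup>2)\<^sup>2"
      unfolding A_def by (intro integral_Markov_inequality_measure[OF int]) (use e in auto)
    also have "\<dots> \<le> (real (Suc k))\<^sup>2 / (e * (real (Suc k))\<^sup>2)\<^sup>2"
      using second[of "(Suc k)\<^sup>2"] by (intro divide_right_mono) simp_all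
    finally show ?thesis
      using cancel[of "(real (Suc k))\<^sup>2"] by simp
  qed
  have "summable (\<lambda>k. measure M (A k))"
  proof (rule summable_comparison_test')
    have "summable (\<lambda>k. inverse ((real k)\<^sup>2))"
      by (rule inverse_power_summable) simp
    then show "summable (\<lambda>k. 1 / e\<^sup>2 * inverse ((real (Suc k))\<^sup>2))"
      by (subst summable_Suc_iff) (rule summable_mult)
    show "norm (measure M (A k)) \<le> 1 / e\<^sup>2 * inverse ((real (Suc k))\<^sup>2)" for k
      using mA[of k] by simp
  qed
  then have "AE \<omega> in M. eventually (\<lambda>k. \<omega> \<in> space M - A k) sequentially"
    by (rule borel_cantelli_AE1[OF A, rotated]) (simp add: less_top[symmetric])
  then show ?thesis
    by eventually_elim (subst eventually_sequentially_Suc[symmetric], auto simp: A_def not_le elim: eventually_mono)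
qed

lemma (in prob_space) AE_LIMSEQ_square_subsequence:
  fixes D :: "nat \<Rightarrow> 'a \<Rightarrow> real"
  assumes meas: "\<And>n. D n \<in> borel_measurable M" and int: "\<And>n. integrable M (\<lambda>\<omega>. (D n \<omega>)\<^sup>2)"
    and second: "\<And>n. (\<integral>\<omega>. (D n \<omega>)\<^sup>2 \<partial>M) \<le> n"
  shows "AE \<omega> in M. (\<lambda>k. D (k\<^sup>2) \<omega> / (real k)\<^sup>2) \<longlonglongrightarrow> 0"
proof -
  have "AE \<omega> in M. \<forall>r::nat. eventually (\<lambda>k. (D (k\<^sup>2) \<omega>)\<^sup>2 < (1 / Suc r * (real k)\<^sup>2)\<^sup>2) sequentially"
    unfolding AE_all_countable
    by (intro allI AE_eventually_square_subsequence_less[OF meas int second]) simp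
  then show ?thesis
  proof eventually_elim
    case (elim \<omega>)
    show ?case
    proof (rule tendstoI)
      fix e :: real assume "e > 0"
      then obtain r where r: "1 / Suc r < e" by (rule nat_approx_posE)
      from elim[rule_format, of r] show "eventually (\<lambda>k. dist (D (k\<^sup>2) \<omega> / (real k)\<^sup>2) 0 < e) sequentially"
      proof (rule eventually_mono)
        fix k assume "(D (k\<^sup>2) \<omega>)\<^sup>2 < (1 / Suc r * (real k)\<^sup>2)\<^sup>2"
        then have "\<bar>D (k\<^sup>2) \<omega>\<bar>\<^sup>2 < (1 / Suc r * (real k)\<^sup>2)\<^sup>2"
          by simp
        then have k: "\<bar>D (k\<^sup>2) \<omega>\<bar> < 1 / Suc r * (real k)\<^sup>2"
          by (rule power2_less_imp_less) simp
        then have "0 < (real k)\<^sup>2"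
          using abs_ge_zero[of "D (k\<^sup>2) \<omega>"] by (cases "k = 0") auto
        then have "\<bar>D (k\<^sup>2) \<omega>\<bar> / (real k)\<^sup>2 < 1 / Suc r"
          using k by (simp only: pos_divide_less_eq)
        then show "dist (D (k\<^sup>2) \<omega> / (real k)\<^sup>2) 0 < e"
          using r by (simp add: dist_real_def abs_divide)
      qed
    qed
  qed
qed

text \<open>Interpolation between consecutive squares: \<open>n - \<lfloor>\<surd>n\<rfloor>\<^sup>2 \<le> 2\<lfloor>\<surd>n\<rfloor>\<close>, and the increments are bounded.\<close>

lemma abs_div_le_floor_sqrt:
  fixes d :: "nat \<Rightarrow> real"
  assumes step: "\<And>n. \<bar>d (Suc n) - d n\<bar> \<le> 1" and n: "n \<ge> 1"
  defines "k \<equiv> floor_sqrt n"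
  shows "\<bar>d n / n\<bar> \<le> \<bar>d (k\<^sup>2) / (real k)\<^sup>2\<bar> + 2 / k"
proof -
  have lip: "\<bar>d n - d m\<bar> \<le> real n - real m" if "m \<le> n" for m n
    using that
  proof (induction n rule: dec_induct)
    case (step n)
    then show ?case using assms(1)[of n] by linarith
  qed simp
  have k: "k\<^sup>2 \<le> n" "n < (Suc k)\<^sup>2" "0 < k"
    using n unfolding k_def by (auto simp: Suc_floor_sqrt_power2_gt)
  have "n - k\<^sup>2 \<le> 2 * k" using k(2) by (simp add: power2_eq_square)
  then have "real (n - k\<^sup>2) \<le> real (2 * k)"
    by (rule of_nat_mono)
  moreover have "real (n - k\<^sup>2) = real n - real (k\<^sup>2)"
    by (rule of_nat_diff[OF k(1)])
  moreover have "real (2 * k) = 2 * real k"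
    by simp
  ultimately have "real n - real (k\<^sup>2) \<le> 2 * real k"
    by linarith
  moreover have "real (k\<^sup>2) \<le> real n"
    using k(1) by (rule of_nat_mono)
  moreover have "0 < real (k\<^sup>2)"
    using k(3) by simp
  moreover have "\<bar>d n\<bar> \<le> \<bar>d (k\<^sup>2)\<bar> + (real n - real (k\<^sup>2))"
    using lip[OF k(1)] by linarith
  ultimately have "\<bar>d n\<bar> / n \<le> (\<bar>d (k\<^sup>2)\<bar> + 2 * k) / real (k\<^sup>2)"
    by (intro frac_le) auto
  also have "\<dots> = \<bar>d (k\<^sup>2) / (real k)\<^sup>2\<bar> + 2 / k"
    using k(3) by (simp add: add_divide_distrib abs_divide power2_eq_square)
  finally show ?thesis
    by (simp add: abs_divide)
qed

lemma LIMSEQ_div_of_square_subsequence: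
  fixes d :: "nat \<Rightarrow> real"
  assumes step: "\<And>n. \<bar>d (Suc n) - d n\<bar> \<le> 1"
    and squares: "(\<lambda>k. d (k\<^sup>2) / (real k)\<^sup>2) \<longlonglongrightarrow> 0"
  shows "(\<lambda>n. d n / n) \<longlonglongrightarrow> 0"
proof -
  let ?s = "\<lambda>n. floor_sqrt n"
  have "filterlim ?s sequentially sequentially"
    unfolding filterlim_at_top eventually_sequentially
  proof
    fix Z :: nat
    show "\<exists>N. \<forall>n\<ge>N. Z \<le> floor_sqrt n"
      by (intro exI[of _ "Z\<^sup>2"]) (simp add: le_floor_sqrt_iff)
  qed
  moreover have "(\<lambda>k. \<bar>d (k\<^sup>2) / (real k)\<^sup>2\<bar> + 2 / real k) \<longlonglongrightarrow> 0"
    using tendsto_add[OF tendsto_rabs_zero[OF squares] lim_const_over_n[of 2]] by simp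
  ultimately have lim: "(\<lambda>n. \<bar>d ((?s n)\<^sup>2) / (real (?s n))\<^sup>2\<bar> + 2 / ?s n) \<longlonglongrightarrow> 0"
    by (rule filterlim_compose[rotated])
  have "eventually (\<lambda>n. norm (d n / n) \<le> \<bar>d ((?s n)\<^sup>2) / (real (?s n))\<^sup>2\<bar> + 2 / ?s n) sequentially"
    using abs_div_le_floor_sqrt[where d=d, OF step] by (intro eventually_sequentiallyI[of 1]) simp
  then show ?thesis
    using lim by (rule Lim_null_comparison)
qed

lemma (in prob_space) strong_law_bounded_uncorrelated:
  fixes Z :: "nat \<Rightarrow> 'a \<Rightarrow> real"
  assumes meas: "\<And>i. Z i \<in> borel_measurable M" and bound: "\<And>i \<omega>. 0 \<le> Z i \<omega> \<and> Z i \<omega> \<le> 1"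
    and p: "0 \<le> p" "p \<le> 1"
    and uncorrelated: "\<And>i j. i \<noteq> j \<Longrightarrow> (\<integral>\<omega>. (Z i \<omega> - p) * (Z j \<omega> - p) \<partial>M) = 0"
  shows "AE \<omega> in M. (\<lambda>n. (\<Sum>i<n. Z i \<omega>) / n) \<longlonglongrightarrow> p"
proof -
  have centred: "\<bar>Z i \<omega> - p\<bar> \<le> 1" for i \<omega>
    using bound[of i \<omega>] p by auto
  note second = second_moment_sum_uncorrelated[of "\<lambda>i \<omega>. Z i \<omega> - p", OF _ centred uncorrelated]
  have "AE \<omega> in M. (\<lambda>k. (\<Sum>i<k\<^sup>2. Z i \<omega> - p) / (real k)\<^sup>2) \<longlonglongrightarrow> 0"
    using meas second by (intro AE_LIMSEQ_square_subsequence) auto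
  then show ?thesis
  proof eventually_elim
    case (elim \<omega>)
    have "(\<lambda>n. (\<Sum>i<n. Z i \<omega> - p) / n) \<longlonglongrightarrow> 0"
      using centred elim by (intro LIMSEQ_div_of_square_subsequence) auto
    then have lim: "(\<lambda>n. (\<Sum>i<n. Z i \<omega> - p) / n + p) \<longlonglongrightarrow> 0 + p"
      by (intro tendsto_add tendsto_const)
    have "eventually (\<lambda>n. (\<Sum>i<n. Z i \<omega> - p) / n + p = (\<Sum>i<n. Z i \<omega>) / n) sequentially"
      by (rule eventually_sequentiallyI[of 1]) (simp add: sum_subtractf field_simps)
    from tendsto_cong[OF this] lim show ?case by simp
  qed
qed

lemma (in prob_space) AE_empirical_frequency_LIMSEQ:
  assumes ind: "indep_vars (\<lambda>_. borel) V UNIV" and inj: "inj f"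
    and dist: "\<And>i. distr M borel (V (f i)) = \<mu>" and S: "S \<in> sets borel"
  shows "AE \<omega> in M. (\<lambda>n. (\<Sum>i<n. indicator S (V (f i) \<omega>)) / real n) \<longlonglongrightarrow> measure \<mu> S"
proof -
  have [measurable]: "V k \<in> borel_measurable M" for k
    using ind unfolding indep_vars_def by auto
  have \<mu>: "prob_space \<mu>" "sets \<mu> = sets borel"
    using prob_space_distr[of "V (f 0)"] dist[of 0] by auto
  define p where "p = measure \<mu> S"
  have p: "0 \<le> p" "p \<le> 1" unfolding p_def using prob_space.prob_le_1[OF \<mu>(1)] by auto
  have mean: "(\<integral>\<omega>. indicator S (V (f i) \<omega>) - p \<partial>M) = 0" for i
  proof -
    have "(\<integral>\<omega>. indicator S (V (f i) \<omega>) - p \<partial>M) = (\<integral>x. indicator S x - p \<partial>\<mu>)"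
      unfolding dist[of i, symmetric] using S by (intro integral_distr[symmetric]) auto
    also have "\<dots> = measure \<mu> S - p"
      using S \<mu> prob_space.prob_space[OF \<mu>(1)] prob_space.finite_measure[OF \<mu>(1)]
        finite_measure.integrable_const[OF prob_space.finite_measure[OF \<mu>(1)], of p]
      by (subst Bochner_Integration.integral_diff)
        (auto simp: finite_measure.emeasure_finite less_top[symmetric])
    finally show ?thesis by (simp add: p_def)
  qed
  show ?thesis
    unfolding p_def[symmetric]
  proof (rule strong_law_bounded_uncorrelated[OF _ _ p])
    fix i j :: nat assume "i \<noteq> j"
    then have fij: "f i \<noteq> f j" using inj by (auto dest: injD)
    define W where "W k \<omega> = indicator S (V k \<omega>) - p" for k \<omega>
    have "indep_vars (\<lambda>_. borel) W {f i, f j}"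
      unfolding W_def using S
      by (intro indep_vars_compose2[where X=V and Y="\<lambda>_ x. indicator S x - p", OF indep_vars_subset[OF ind]]) auto
    moreover have "integrable M (W k)" for k
      unfolding W_def using S p by (intro integrable_const_bound[where B=1]) (auto simp: indicator_def)
    ultimately have "(\<integral>\<omega>. (\<Prod>k\<in>{f i, f j}. W k \<omega>) \<partial>M) = (\<Prod>k\<in>{f i, f j}. \<integral>\<omega>. W k \<omega> \<partial>M)"
      by (intro indep_vars_lebesgue_integral) auto
    then show "(\<integral>\<omega>. (indicator S (V (f i) \<omega>) - p) * (indicator S (V (f j) \<omega>) - p) \<partial>M) = 0"
      using fij mean[of i] mean[of j] by (simp add: W_def)
  qed (use S in auto)
qed

section \<open>Posterior concentration\<close>

lemma integrable_kolmogorov_dist_left: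
  assumes D: "prob_space D" "sets D = sets (prob_algebra borel)" and H: "real_distribution H"
  shows "integrable D (\<lambda>P. kolmogorov_dist P H)"
proof -
  interpret prob_space D by (fact D(1))
  have "prob_space H" using H by (simp add: real_distribution_def)
  then have "\<bar>kolmogorov_dist P H\<bar> \<le> 1" if "P \<in> space D" for P
    using that kolmogorov_dist_nonneg kolmogorov_dist_le_1
    by (auto simp: sets_eq_imp_space_eq[OF D(2)] space_prob_algebra)
  then show ?thesis
    using kolmogorov_dist_measurable_left[OF H]
    by (intro integrable_const_bound[where B=1] AE_I2) (auto simp: measurable_cong_sets[OF D(2) refl])
qed

lemma integral_DP_kolmogorov_dist_le:
  assumes a: "a > 0" and F0: "real_distribution F0" and H: "real_distribution H"
    and F: "finite F" "F \<subseteq> sets borel"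
    and brk: "\<And>P. prob_space P \<Longrightarrow> sets P = sets borel
      \<Longrightarrow> kolmogorov_dist P H \<le> (\<Sum>S\<in>F. \<bar>measure P S - measure H S\<bar>) + e"
  shows "(\<integral>P. kolmogorov_dist P H \<partial>DP a F0)
    \<le> card F * sqrt (1 / (a + 1)) + (\<Sum>S\<in>F. \<bar>measure F0 S - measure H S\<bar>) + e"
proof -
  interpret D: prob_space "DP a F0" by (rule prob_space_DP[OF a F0])
  have P: "prob_space P" "sets P = sets borel" if "P \<in> space (DP a F0)" for P
    using that by (auto simp: space_prob_algebra)
  have F0p: "prob_space F0" using F0 by (simp add: real_distribution_def)
  have dev: "integrable (DP a F0) (\<lambda>P. \<bar>measure P S - measure F0 S\<bar>)" if "S \<in> F" for S
    using that F(2) measurable_measure_prob_algebra[of S "borel :: real measure"]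
    by (intro D.integrable_const_bound[where B=1] AE_I2)
      (auto simp: measurable_cong_sets[OF sets_DP refl] space_prob_algebra
        intro!: abs_measure_diff_le_1 F0p)
  have "(\<integral>P. kolmogorov_dist P H \<partial>DP a F0)
      \<le> (\<integral>P. (\<Sum>S\<in>F. \<bar>measure P S - measure F0 S\<bar>) + ((\<Sum>S\<in>F. \<bar>measure F0 S - measure H S\<bar>) + e) \<partial>DP a F0)"
  proof (rule integral_mono)
    show "integrable (DP a F0) (\<lambda>P. kolmogorov_dist P H)"
      by (intro integrable_kolmogorov_dist_left D.prob_space_axioms sets_DP H)
    fix P assume "P \<in> space (DP a F0)"
    then have "kolmogorov_dist P H \<le> (\<Sum>S\<in>F. \<bar>measure P S - measure H S\<bar>) + e"
      using brk P by blast
    also have "(\<Sum>S\<in>F. \<bar>measure P S - measure H S\<bar>)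
        \<le> (\<Sum>S\<in>F. \<bar>measure P S - measure F0 S\<bar> + \<bar>measure F0 S - measure H S\<bar>)"
      by (intro sum_mono) simp
    finally show "kolmogorov_dist P H
        \<le> (\<Sum>S\<in>F. \<bar>measure P S - measure F0 S\<bar>) + ((\<Sum>S\<in>F. \<bar>measure F0 S - measure H S\<bar>) + e)"
      by (simp add: sum.distrib)
  qed (use dev in auto)
  also have "\<dots> = (\<Sum>S\<in>F. \<integral>P. \<bar>measure P S - measure F0 S\<bar> \<partial>DP a F0)
      + ((\<Sum>S\<in>F. \<bar>measure F0 S - measure H S\<bar>) + e)"
    using dev D.prob_space by (simp add: Bochner_Integration.integral_sum Bochner_Integration.integrable_sum)
  also have "(\<Sum>S\<in>F. \<integral>P. \<bar>measure P S - measure F0 S\<bar> \<partial>DP a F0) \<le> (\<Sum>S\<in>F. sqrt (1 / (a + 1)))"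
    using F(2) by (intro sum_mono integral_DP_abs_measure_deviation_le[OF a F0]) auto
  finally show ?thesis by simp
qed

lemma measure_post_base_LIMSEQ:
  fixes K :: real
  assumes K: "K > 0" and G: "prob_space G" "sets G = sets borel" and S: "S \<in> sets borel"
    and freq: "(\<lambda>n. (\<Sum>i<n. indicator S (xs i)) / real n) \<longlonglongrightarrow> c"
  shows "(\<lambda>n. measure (post_base K G xs n) S) \<longlonglongrightarrow> c"
proof -
  have K_n: "(\<lambda>n. C / (K + real n)) \<longlonglongrightarrow> 0" for C
    by (intro tendsto_divide_0[OF tendsto_const] filterlim_at_top_imp_at_infinity
        filterlim_tendsto_add_at_top[OF tendsto_const filterlim_real_sequentially])
  have "measure (post_base K G xs n) S
      = K * measure G S / (K + real n) + (1 - K / (K + real n)) * ((\<Sum>i<n. indicator S (xs i)) / real n)" for n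
  proof (cases "n = 0")
    case False
    have "1 - K / (K + real n) = real n / (K + real n)"
      using K by (simp add: field_simps)
    then show ?thesis
      using False K by (simp add: measure_post_base[OF K G S] add_divide_distrib)
  qed (simp add: measure_post_base[OF K G S])
  moreover have "(\<lambda>n. K * measure G S / (K + real n)
      + (1 - K / (K + real n)) * ((\<Sum>i<n. indicator S (xs i)) / real n)) \<longlonglongrightarrow> 0 + (1 - 0) * c"
    by (intro tendsto_intros K_n freq)
  ultimately show ?thesis by simp
qed

lemma LIMSEQ_0_if_approx:
  fixes f :: "nat \<Rightarrow> real"
  assumes "\<And>n. 0 \<le> f n" and "\<And>e. e > 0 \<Longrightarrow> \<exists>g. g \<longlonglongrightarrow> 0 \<and> (\<forall>n. f n \<le> g n + e)"
  shows "f \<longlonglongrightarrow> 0"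
proof (rule LIMSEQ_I)
  fix r :: real assume "r > 0"
  then obtain g where g: "g \<longlonglongrightarrow> 0" "\<And>n. f n \<le> g n + r / 2"
    using assms(2)[of "r / 2"] by auto
  then have "eventually (\<lambda>n. g n < r / 2) sequentially"
    using \<open>r > 0\<close> by (intro order_tendstoD) auto
  then obtain N where N: "\<And>n. n \<ge> N \<Longrightarrow> g n < r / 2"
    by (auto simp: eventually_sequentially)
  show "\<exists>N. \<forall>n\<ge>N. norm (f n - 0) < r"
  proof (intro exI allI impI)
    fix n assume "n \<ge> N"
    then have "f n < r" using g(2)[of n] N[of n] by linarith
    then show "norm (f n - 0) < r" using assms(1)[of n] by simp
  qed
qed

lemma integral_DP_post_base_kolmogorov_dist_LIMSEQ:
  fixes K :: real
  assumes K: "K > 0" and G: "prob_space G" "sets G = sets borel"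
    and H: "real_distribution H" and \<F>: "kolmogorov_brackets H \<F>"
    and freq: "\<And>S. S \<in> \<F> \<Longrightarrow> (\<lambda>n. (\<Sum>i<n. indicator S (xs i)) / real n) \<longlonglongrightarrow> measure H S"
  shows "(\<lambda>n. \<integral>P. kolmogorov_dist P H \<partial>DP (K + real n) (post_base K G xs n)) \<longlonglongrightarrow> 0"
proof (rule LIMSEQ_0_if_approx)
  fix n
  have "AE P in DP (K + real n) (post_base K G xs n). 0 \<le> kolmogorov_dist P H"
    using H by (intro AE_I2 kolmogorov_dist_nonneg) (auto simp: space_prob_algebra real_distribution_def)
  then show "0 \<le> (\<integral>P. kolmogorov_dist P H \<partial>DP (K + real n) (post_base K G xs n))"
    by (rule integral_nonneg_AE)
next
  fix e :: real assume "e > 0"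
  then obtain F where F: "F \<subseteq> \<F>" "finite F" "\<And>P. prob_space P \<Longrightarrow> sets P = sets borel
      \<Longrightarrow> kolmogorov_dist P H \<le> (\<Sum>S\<in>F. \<bar>measure P S - measure H S\<bar>) + e"
    using \<F> unfolding kolmogorov_brackets_def by blast
  have F_borel: "F \<subseteq> sets borel" using F(1) \<F> by (auto simp: kolmogorov_brackets_def)
  let ?g = "\<lambda>n. card F * sqrt (1 / (K + real n + 1))
    + (\<Sum>S\<in>F. \<bar>measure (post_base K G xs n) S - measure H S\<bar>)"
  have "(\<lambda>n. 1 / (K + 1 + real n)) \<longlonglongrightarrow> 0"
    by (intro tendsto_divide_0[OF tendsto_const] filterlim_at_top_imp_at_infinity
        filterlim_tendsto_add_at_top[OF tendsto_const filterlim_real_sequentially])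
  then have "(\<lambda>n. sqrt (1 / (K + real n + 1))) \<longlonglongrightarrow> sqrt 0"
    by (intro tendsto_real_sqrt) (simp add: add_ac)
  moreover have "(\<lambda>n. measure (post_base K G xs n) S) \<longlonglongrightarrow> measure H S" if "S \<in> F" for S
    using that F(1) F_borel by (intro measure_post_base_LIMSEQ[OF K G] freq) auto
  ultimately have "?g \<longlonglongrightarrow> card F * sqrt 0 + (\<Sum>S\<in>F. \<bar>measure H S - measure H S\<bar>)"
    by (intro tendsto_add tendsto_mult_left tendsto_sum tendsto_rabs tendsto_diff tendsto_const) auto
  moreover have "(\<integral>P. kolmogorov_dist P H \<partial>DP (K + real n) (post_base K G xs n)) \<le> ?g n + e" for n
    using integral_DP_kolmogorov_dist_le[of "K + real n" "post_base K G xs n" H F e]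
      K G H F F_borel real_distribution_post_base
    by (simp add: add_ac)
  ultimately show "\<exists>g. g \<longlonglongrightarrow> 0 \<and> (\<forall>n. (\<integral>P. kolmogorov_dist P H \<partial>DP (K + real n) (post_base K G xs n)) \<le> g n + e)"
    by (intro exI[of _ ?g]) simp
qed

lemma abs_integral_kolmogorov_dist_pair_le:
  assumes D1: "prob_space D1" "sets D1 = sets (prob_algebra borel)"
    and D2: "prob_space D2" "sets D2 = sets (prob_algebra borel)"
    and H1: "real_distribution H1" and H2: "real_distribution H2"
  shows "\<bar>(\<integral>PQ. kolmogorov_dist (fst PQ) (snd PQ) \<partial>(D1 \<Otimes>\<^sub>M D2)) - kolmogorov_dist H1 H2\<bar>
     \<le> (\<integral>P. kolmogorov_dist P H1 \<partial>D1) + (\<integral>Q. kolmogorov_dist Q H2 \<partial>D2)"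
proof -
  interpret D: prob_space "D1 \<Otimes>\<^sub>M D2" by (rule prob_space_pair[OF D1(1) D2(1)])
  have H: "prob_space H1" "prob_space H2" using H1 H2 by (auto simp: real_distribution_def)
  have space: "space (D1 \<Otimes>\<^sub>M D2) = space (prob_algebra borel) \<times> space (prob_algebra borel)"
    by (simp add: space_pair_measure sets_eq_imp_space_eq[OF D1(2)] sets_eq_imp_space_eq[OF D2(2)])
  have pair: "prob_space (fst x)" "prob_space (snd x)" if "x \<in> space (D1 \<Otimes>\<^sub>M D2)" for x
    using that by (auto simp: space space_prob_algebra)
  have one: "integrable D1 (\<lambda>_. 1::real)" "integrable D2 (\<lambda>_. 1::real)"
    using D1(1) D2(1) by (auto intro: finite_measure.integrable_const prob_space.finite_measure)
  note marg1 = integral_pair_measure_mult[OF D1(1) D2(1) integrable_kolmogorov_dist_left[OF D1 H1] one(2)]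
  note marg2 = integral_pair_measure_mult[OF D1(1) D2(1) one(1) integrable_kolmogorov_dist_left[OF D2 H2]]
  have int: "integrable (D1 \<Otimes>\<^sub>M D2) (\<lambda>PQ. kolmogorov_dist (fst PQ) (snd PQ))"
    using pair kolmogorov_dist_nonneg kolmogorov_dist_le_1 kolmogorov_dist_measurable
    by (intro D.integrable_const_bound[where B=1])
      (auto simp: measurable_cong_sets[OF sets_pair_measure_cong[OF D1(2) D2(2)] refl])
  then have "\<bar>(\<integral>PQ. kolmogorov_dist (fst PQ) (snd PQ) \<partial>(D1 \<Otimes>\<^sub>M D2)) - kolmogorov_dist H1 H2\<bar>
      = \<bar>\<integral>PQ. kolmogorov_dist (fst PQ) (snd PQ) - kolmogorov_dist H1 H2 \<partial>(D1 \<Otimes>\<^sub>M D2)\<bar>"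
    using D.prob_space by simp
  also have "\<dots> \<le> (\<integral>PQ. \<bar>kolmogorov_dist (fst PQ) (snd PQ) - kolmogorov_dist H1 H2\<bar> \<partial>(D1 \<Otimes>\<^sub>M D2))"
    by (rule integral_abs_bound)
  also have "\<dots> \<le> (\<integral>PQ. kolmogorov_dist (fst PQ) H1 + kolmogorov_dist (snd PQ) H2 \<partial>(D1 \<Otimes>\<^sub>M D2))"
    using marg1 marg2 int pair H abs_kolmogorov_dist_diff_le
    by (intro integral_mono) (auto simp: prob_space.prob_space D1 D2)
  also have "\<dots> = (\<integral>P. kolmogorov_dist P H1 \<partial>D1) + (\<integral>Q. kolmogorov_dist Q H2 \<partial>D2)"
    using marg1 marg2 by (simp add: prob_space.prob_space D1 D2)
  finally show ?thesis .
qed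

lemma WIKS_LIMSEQ:
  fixes K :: real
  assumes K: "K > 0" and G: "prob_space G" "sets G = sets borel"
    and H1: "real_distribution H1" and H2: "real_distribution H2"
    and A: "(\<lambda>n. \<integral>P. kolmogorov_dist P H1 \<partial>DP (K + real n) (post_base K G xs n)) \<longlonglongrightarrow> 0"
    and B: "(\<lambda>m. \<integral>Q. kolmogorov_dist Q H2 \<partial>DP (K + real m) (post_base K G ys m)) \<longlonglongrightarrow> 0"
  shows "((\<lambda>(n, m). WIKS K G xs ys n m) \<longlongrightarrow> kolmogorov_dist H1 H2) (sequentially \<times>\<^sub>F sequentially)"
proof -
  let ?A = "\<lambda>n. \<integral>P. kolmogorov_dist P H1 \<partial>DP (K + real n) (post_base K G xs n)"
  let ?B = "\<lambda>m. \<integral>Q. kolmogorov_dist Q H2 \<partial>DP (K + real m) (post_base K G ys m)"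
  have "norm (WIKS K G xs ys n m - kolmogorov_dist H1 H2) \<le> ?A n + ?B m" for n m
  proof -
    have "K + real n > 0" "K + real m > 0" using K by auto
    then show ?thesis
      unfolding WIKS_def real_norm_def
      using real_distribution_post_base[OF K G]
      by (intro abs_integral_kolmogorov_dist_pair_le prob_space_DP sets_DP H1 H2) auto
  qed
  then have bound: "eventually (\<lambda>x. norm (WIKS K G xs ys (fst x) (snd x) - kolmogorov_dist H1 H2)
      \<le> ?A (fst x) + ?B (snd x)) (sequentially \<times>\<^sub>F sequentially)"
    by (intro always_eventually) simp
  have "((\<lambda>x. ?A (fst x) + ?B (snd x)) \<longlongrightarrow> 0 + 0) (sequentially \<times>\<^sub>F sequentially)"
    by (intro tendsto_add filterlim_compose[OF A filterlim_fst] filterlim_compose[OF B filterlim_snd])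
  then have "((\<lambda>x. WIKS K G xs ys (fst x) (snd x) - kolmogorov_dist H1 H2) \<longlongrightarrow> 0)
      (sequentially \<times>\<^sub>F sequentially)"
    using Lim_null_comparison[OF bound] by simp
  then show ?thesis
    by (simp add: case_prod_beta' LIM_zero_iff)
qed

lemma (in prob_space) AE_integral_DP_posterior_kolmogorov_dist_LIMSEQ:
  fixes K :: real and V :: "'i \<Rightarrow> 'a \<Rightarrow> real" and f :: "nat \<Rightarrow> 'i"
  assumes K: "K > 0" and G: "prob_space G" "sets G = sets borel"
    and ind: "indep_vars (\<lambda>_. borel) V UNIV" and inj: "inj f"
    and ident: "\<And>i. distr M borel (V (f i)) = distr M borel (V (f 0))"
  shows "AE \<omega> in M. (\<lambda>n. \<integral>P. kolmogorov_dist P (distr M borel (V (f 0)))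
    \<partial>DP (K + real n) (post_base K G (\<lambda>i. V (f i) \<omega>) n)) \<longlonglongrightarrow> 0"
proof -
  let ?H = "distr M borel (V (f 0))"
  have H: "real_distribution ?H"
    using ind by (intro real_distribution_distr) (auto simp: indep_vars_def)
  obtain \<F> where \<F>: "countable \<F>" "kolmogorov_brackets ?H \<F>"
    using countable_kolmogorov_brackets[OF H] by blast
  have "AE \<omega> in M. \<forall>S\<in>\<F>. (\<lambda>n. (\<Sum>i<n. indicator S (V (f i) \<omega>)) / real n) \<longlonglongrightarrow> measure ?H S"
    using \<F> by (intro AE_ball_countable' AE_empirical_frequency_LIMSEQ[OF ind inj ident])
      (auto simp: kolmogorov_brackets_def)
  then show ?thesis
    by eventually_elim (auto intro!: integral_DP_post_base_kolmogorov_dist_LIMSEQ[OF K G H \<F>(2)])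
qed

theorem corollary2:
  fixes M :: "'a measure" and K C :: real and G :: "real measure"
    and X Y :: "nat \<Rightarrow> 'a \<Rightarrow> real" and HX HY :: "real \<Rightarrow> real"
  assumes "K > 0"
    and "prob_space G" and "sets G = sets borel"
    and "C > 0"
    and "\<exists>\<nu> f. sets \<nu> = sets borel \<and> f \<in> borel_measurable \<nu> \<and> G = density \<nu> f
                \<and> (\<forall>x. f x \<le> ennreal C)"
    and "prob_space M"
    and "prob_space.indep_vars M (\<lambda>_. borel)
           (\<lambda>i. case i of Inl j \<Rightarrow> X j | Inr j \<Rightarrow> Y j) (UNIV :: (nat + nat) set)"
    and "\<And>i. cdf (distr M borel (X i)) = HX"
    and "\<And>j. cdf (distr M borel (Y j)) = HY"
  shows "AE \<omega> in M. ((\<lambda>(n, m). WIKS K G (\<lambda>i. X i \<omega>) (\<lambda>j. Y j \<omega>) n m)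
            \<longlongrightarrow> (SUP x. \<bar>HX x - HY x\<bar>)) (sequentially \<times>\<^sub>F sequentially)"
proof -
  note K = assms(1) and G = assms(2,3)
  interpret prob_space M by (fact assms(6))
  define V where "V = (\<lambda>i. case i of Inl j \<Rightarrow> X j | Inr j \<Rightarrow> Y j)"
  have ind: "indep_vars (\<lambda>_. borel) V UNIV"
    using assms(7) unfolding V_def .
  have XV: "X j = V (Inl j)" "Y j = V (Inr j)" for j
    by (simp_all add: V_def)
  have V: "V k \<in> borel_measurable M" for k
    using ind unfolding indep_vars_def by auto
  then have [measurable]: "X j \<in> borel_measurable M" "Y j \<in> borel_measurable M" for j
    unfolding XV by auto
  have "distr M borel (X j) = distr M borel (X 0)" "distr M borel (Y j) = distr M borel (Y 0)" for j
    by (auto intro!: cdf_unique real_distribution_distr simp: assms(8,9))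
  note ident = this[unfolded XV]
  have limit: "(SUP x. \<bar>HX x - HY x\<bar>) = kolmogorov_dist (distr M borel (X 0)) (distr M borel (Y 0))"
    unfolding kolmogorov_dist_def assms(8)[of 0, symmetric] assms(9)[of 0, symmetric] cdf_def ..
  show ?thesis
    unfolding limit XV
    using AE_integral_DP_posterior_kolmogorov_dist_LIMSEQ[OF K G ind inj_Inl ident(1)]
      AE_integral_DP_posterior_kolmogorov_dist_LIMSEQ[OF K G ind inj_Inr ident(2)]
    by eventually_elim (auto intro!: WIKS_LIMSEQ[OF K G] real_distribution_distr V)
qed

end
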